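(* Let $H$ be a Hessenberg space of $n\times n$ matrices that is minimal in its $E_{1n}$-equivalence class, and let $H=\sum_{(i,j)\in S}H_{ij}$ be a maximal decomposition. Then the irreducible components of $X_H$ are exactly the Schubert varieties $X_{H_{ij}}$, $(i,j)\in S$.
   Context: $B$ is the group of invertible upper-triangular $n\times n$ complex matrices; $[g]$ denotes the flag whose $k$-dimensional subspace is spanned by the first $k$ columns of $g$. $E_{kl}$ is the matrix unit with $1$ in entry $(k,l)$. A Hessenberg space is a subspace of the form $H_h=\operatorname{span}\{E_{kl}: k\le h(l)\}$ for a nondecreasing function $h:\{1,\dots,n\}\to\{0,1,\dots,n\}$. For $1\le i,j\le n$, $H_{ij}=\operatorname{span}\{E_{kl}: k\le i,\ l\ge j\}$. For a Hessenberg space $K$, $X_K=\{[g]\in GL_n(\mathbb{C})/B: g^{-1}E_{1n}g\in K\}$. Two Hessenberg spaces $K,K'$ are $E_{1n}$-equivalent if $X_K=X_{K'}$; $K$ is minimal in its class if no Hessenberg space properly contained in $K$ is $E_{1n}$-equivalent to it. A maximal decomposition of $H$ is an expression $H=\sum_{(i,j)\in S}H_{ij}$ (sum of subspaces) over a set $S$ of pairs such that no two distinct pairs $(i,j),(i',j')\in S$ satisfy $H_{ij}\subseteq H_{i'j'}$. (For $i\ne j$, $X_{H_{ij}}$ is a Schubert variety, i.e. the closure of a set $\{[bw]:b\in B\}$ for a permutation matrix $w$.) *)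

theory Defs
  imports "Jordan_Normal_Form.Matrix"
begin

text \<open>Matrices are Jordan_Normal_Form matrices of dimension n x n with
  0-based indices; the paper's entry (k,l) (1-based) is entry (k-1,l-1) here.
  Patterns (sets of positions) are given with the paper's 1-based indices.\<close>

definition GL :: "nat \<Rightarrow> complex mat set" where
  "GL n = {g \<in> carrier_mat n n. invertible_mat g}"

definition Borel :: "nat \<Rightarrow> complex mat set" where
  "Borel n = {b \<in> carrier_mat n n. invertible_mat b \<and> upper_triangular b}"

text \<open>The flag [g], represented by the coset gB.\<close>
definition flag :: "nat \<Rightarrow> complex mat \<Rightarrow> complex mat set" where
  "flag n g = {g * b | b. b \<in> Borel n}"

definition flag_variety :: "nat \<Rightarrow> complex mat set set" where
  "flag_variety n = flag n ` GL n"

definition Eunit :: "nat \<Rightarrow> nat \<Rightarrow> nat \<Rightarrow> complex mat" where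
  "Eunit n k l = mat n n (\<lambda>(a, b). if a = k - 1 \<and> b = l - 1 then 1 else 0)"

text \<open>Span of the matrix units E_{kl}, (k,l) in P (1-based positions in {1..n}):
  the matrices supported on P.\<close>
definition unit_span :: "nat \<Rightarrow> (nat \<times> nat) set \<Rightarrow> complex mat set" where
  "unit_span n P = {A \<in> carrier_mat n n. \<forall>a<n. \<forall>b<n. (a + 1, b + 1) \<notin> P \<longrightarrow> A $$ (a, b) = 0}"

definition hess_space :: "nat \<Rightarrow> (nat \<Rightarrow> nat) \<Rightarrow> complex mat set" where
  "hess_space n h = unit_span n {(k, l). k \<in> {1..n} \<and> l \<in> {1..n} \<and> k \<le> h l}"

definition is_hessenberg :: "nat \<Rightarrow> complex mat set \<Rightarrow> bool" where
  "is_hessenberg n K \<longleftrightarrow> (\<exists>h. mono_on {1..n} h \<and> (\<forall>l\<in>{1..n}. h l \<le> n) \<and> K = hess_space n h)"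

definition Hij_pattern :: "nat \<Rightarrow> nat \<Rightarrow> nat \<Rightarrow> (nat \<times> nat) set" where
  "Hij_pattern n i j = {(k, l). k \<in> {1..n} \<and> l \<in> {1..n} \<and> k \<le> i \<and> j \<le> l}"

definition Hij :: "nat \<Rightarrow> nat \<Rightarrow> nat \<Rightarrow> complex mat set" where
  "Hij n i j = unit_span n (Hij_pattern n i j)"

text \<open>The sum of the subspaces H_{ij}, (i,j) in S: the span of the union of the unit sets.\<close>
definition Hsum :: "nat \<Rightarrow> (nat \<times> nat) set \<Rightarrow> complex mat set" where
  "Hsum n S = unit_span n (\<Union>(i, j)\<in>S. Hij_pattern n i j)"

definition XK :: "nat \<Rightarrow> complex mat set \<Rightarrow> complex mat set set" where
  "XK n K = {flag n g | g. g \<in> GL n \<and>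
      (\<exists>ginv \<in> carrier_mat n n. ginv * g = 1\<^sub>m n \<and> g * ginv = 1\<^sub>m n \<and>
          ginv * Eunit n 1 n * g \<in> K)}"

definition E1n_equivalent :: "nat \<Rightarrow> complex mat set \<Rightarrow> complex mat set \<Rightarrow> bool" where
  "E1n_equivalent n K K' \<longleftrightarrow> XK n K = XK n K'"

definition minimal_in_class :: "nat \<Rightarrow> complex mat set \<Rightarrow> bool" where
  "minimal_in_class n K \<longleftrightarrow> is_hessenberg n K \<and>
     (\<forall>K'. is_hessenberg n K' \<and> K' \<subset> K \<longrightarrow> \<not> E1n_equivalent n K' K)"

definition maximal_decomposition :: "nat \<Rightarrow> complex mat set \<Rightarrow> (nat \<times> nat) set \<Rightarrow> bool" where
  "maximal_decomposition n H S \<longleftrightarrow> S \<subseteq> {1..n} \<times> {1..n} \<and> H = Hsum n S \<and>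
     (\<forall>p\<in>S. \<forall>q\<in>S. p \<noteq> q \<longrightarrow> \<not> Hij n (fst p) (snd p) \<subseteq> Hij n (fst q) (snd q))"

inductive_set poly_fun :: "nat \<Rightarrow> (complex mat \<Rightarrow> complex) set" for n where
  const: "(\<lambda>_. c) \<in> poly_fun n"
| coord: "a < n \<Longrightarrow> b < n \<Longrightarrow> (\<lambda>A. A $$ (a, b)) \<in> poly_fun n"
| add: "f \<in> poly_fun n \<Longrightarrow> g \<in> poly_fun n \<Longrightarrow> (\<lambda>A. f A + g A) \<in> poly_fun n"
| mult: "f \<in> poly_fun n \<Longrightarrow> g \<in> poly_fun n \<Longrightarrow> (\<lambda>A. f A * g A) \<in> poly_fun n"

definition zariski_closed_GL :: "nat \<Rightarrow> complex mat set \<Rightarrow> bool" where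
  "zariski_closed_GL n C \<longleftrightarrow> (\<exists>F \<subseteq> poly_fun n. C = {g \<in> GL n. \<forall>f\<in>F. f g = 0})"

text \<open>Closed subsets of the flag variety GL_n/B (quotient Zariski topology):
  sets of flags whose preimage in GL_n is Zariski closed.\<close>
definition flag_closed :: "nat \<Rightarrow> complex mat set set \<Rightarrow> bool" where
  "flag_closed n Z \<longleftrightarrow> Z \<subseteq> flag_variety n \<and> zariski_closed_GL n (\<Union>Z)"

definition flag_irreducible :: "nat \<Rightarrow> complex mat set set \<Rightarrow> bool" where
  "flag_irreducible n Y \<longleftrightarrow> Y \<noteq> {} \<and> Y \<subseteq> flag_variety n \<and>
     (\<forall>Z1 Z2. flag_closed n Z1 \<and> flag_closed n Z2 \<and> Y \<subseteq> Z1 \<union> Z2 \<longrightarrow> Y \<subseteq> Z1 \<or> Y \<subseteq> Z2)"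

definition irreducible_component :: "nat \<Rightarrow> complex mat set set \<Rightarrow> complex mat set set \<Rightarrow> bool" where
  "irreducible_component n X Y \<longleftrightarrow> Y \<subseteq> X \<and> flag_irreducible n Y \<and>
     (\<forall>Y'. Y \<subseteq> Y' \<and> Y' \<subseteq> X \<and> flag_irreducible n Y' \<longrightarrow> Y' = Y)"

end

(* For g in GL_n the matrix g^-1 E_1n g is the rank one matrix u v built from the first
   column u of g^-1 and the last row v of g, and v u = 0 when n >= 2. So [g] lies on X_{H_ij}
   iff u is supported in the first i and v in the last n - j + 1 coordinates, and X_H is the
   union of the X_{H_ij} over any decomposition of H. For
   i <> j the preimage of X_{H_ij} in GL_n is irreducible: it contains a product D R of two
   sets cut out of GL_n by linear equations, any two points of which are joined by a
   polynomial curve running generically in D R, and every other point starts such a curve.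
   Maximality of the decomposition makes the X_{H_ij} pairwise incomparable (permutation
   matrices separate them), and minimality of H excludes i = j: a diagonal term makes (k, k)
   a corner of the Hessenberg pattern, where every E_1n-conjugate in H vanishes because
   v u = 0, so E_kk could be dropped from H. The irreducible components of a finite union of
   pairwise incomparable closed irreducible sets are these sets. *)

theory Submission
  imports Defs "Jordan_Normal_Form.Determinant" "HOL-Computational_Algebra.Polynomial"
begin

section \<open>Invertible matrices\<close>

lemma mult_mat_entry:
  assumes "A \<in> carrier_mat n n" "B \<in> carrier_mat n n" "a < n" "b < n"
  shows "(A * B) $$ (a, b) = (\<Sum>c<n. A $$ (a, c) * B $$ (c, b))"
  using assms by (auto simp: scalar_prod_def atLeast0LessThan intro!: sum.cong)

lemma sum_eq_single_nonzero:
  assumes "finite A" "m \<in> A" "\<And>y. y \<in> A \<Longrightarrow> y \<noteq> m \<Longrightarrow> f y = 0"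
  shows "sum f A = f m"
  using sum.mono_neutral_right[of A "{m}" f] assms by auto

definition GL_inv :: "complex mat \<Rightarrow> complex mat" where
  "GL_inv g = (1 / det g) \<cdot>\<^sub>m adj_mat g"

lemma GL_inv_carrier: "g \<in> carrier_mat n n \<Longrightarrow> GL_inv g \<in> carrier_mat n n"
  unfolding GL_inv_def using adj_mat(1)[of g n] by simp

lemma GL_inv_inverse:
  assumes g: "g \<in> carrier_mat n n" and d: "det g \<noteq> 0"
  shows "GL_inv g * g = 1\<^sub>m n" "g * GL_inv g = 1\<^sub>m n"
proof -
  have one: "(1 / det g) \<cdot>\<^sub>m (det g \<cdot>\<^sub>m 1\<^sub>m n) = 1\<^sub>m n"
    by (rule eq_matI) (use d in auto)
  show "GL_inv g * g = 1\<^sub>m n"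
    using adj_mat[OF g] g one by (simp add: GL_inv_def mult_smult_assoc_mat[of _ n n])
  show "g * GL_inv g = 1\<^sub>m n"
    using adj_mat[OF g] g one by (simp add: GL_inv_def mult_smult_distrib[of g n n])
qed

lemma left_inverse_unique:
  fixes g h h' :: "'a :: semiring_1 mat"
  assumes "g \<in> carrier_mat n n" "h \<in> carrier_mat n n" "h' \<in> carrier_mat n n"
    "h * g = 1\<^sub>m n" "g * h' = 1\<^sub>m n"
  shows "h = h'"
proof -
  have "h = h * (g * h')" using assms(2,5) right_mult_one_mat[of h n n] by simp
  also have "\<dots> = (h * g) * h'" using assms(1-3) by (simp add: assoc_mult_mat)
  finally show ?thesis using assms(3,4) by simp
qed

lemma GL_iff_det: "g \<in> GL n \<longleftrightarrow> g \<in> carrier_mat n n \<and> det g \<noteq> 0"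
proof
  assume "g \<in> GL n"
  then obtain h where g: "g \<in> carrier_mat n n" and "g * h = 1\<^sub>m n" "h * g = 1\<^sub>m (dim_row h)"
    unfolding GL_def invertible_mat_def inverts_mat_def by auto
  then have h: "h \<in> carrier_mat n n" "h * g = 1\<^sub>m n"
    by (metis carrier_matD index_mult_mat(2,3) index_one_mat(2,3) carrier_matI)+
  have "det h * det g = 1" using det_mult[OF h(1) g] h(2) by simp
  then show "g \<in> carrier_mat n n \<and> det g \<noteq> 0" using g by auto
next
  assume g: "g \<in> carrier_mat n n \<and> det g \<noteq> 0"
  then show "g \<in> GL n"
    using GL_inv_inverse[of g n] GL_inv_carrier[of g n]
    unfolding GL_def invertible_mat_def inverts_mat_def by (auto intro!: exI[of _ "GL_inv g"])
qed

lemma GL_carrier: "g \<in> GL n \<Longrightarrow> g \<in> carrier_mat n n"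
  by (simp add: GL_iff_det)

lemma GL_inv_left: "g \<in> GL n \<Longrightarrow> GL_inv g * g = 1\<^sub>m n"
  and GL_inv_right: "g \<in> GL n \<Longrightarrow> g * GL_inv g = 1\<^sub>m n"
  by (simp_all add: GL_iff_det GL_inv_inverse)

lemma GL_I:
  assumes "g \<in> carrier_mat n n" "h \<in> carrier_mat n n" "h * g = 1\<^sub>m n"
  shows "g \<in> GL n"
proof -
  have "det h * det g = 1" using det_mult[OF assms(2,1)] assms(3) by simp
  then show ?thesis using assms(1) by (auto simp: GL_iff_det)
qed

lemma GL_inv_eqI:
  assumes "g \<in> GL n" "h \<in> carrier_mat n n" "h * g = 1\<^sub>m n"
  shows "GL_inv g = h"
  using left_inverse_unique[OF GL_carrier[OF assms(1)] assms(2) GL_inv_carrier[OF GL_carrier]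
      assms(3) GL_inv_right] assms(1) by simp

lemma GL_inv_GL: "g \<in> GL n \<Longrightarrow> GL_inv g \<in> GL n"
  using GL_I[OF GL_inv_carrier[OF GL_carrier] GL_carrier GL_inv_right] by blast

lemma GL_mult: "a \<in> GL n \<Longrightarrow> b \<in> GL n \<Longrightarrow> a * b \<in> GL n"
  by (auto simp: GL_iff_det det_mult)

lemma GL_inv_mult:
  assumes a: "a \<in> GL n" and b: "b \<in> GL n"
  shows "GL_inv (a * b) = GL_inv b * GL_inv a"
proof (rule GL_inv_eqI[OF GL_mult[OF a b]])
  have c: "a \<in> carrier_mat n n" "b \<in> carrier_mat n n" "GL_inv a \<in> carrier_mat n n"
    "GL_inv b \<in> carrier_mat n n" using a b by (auto intro: GL_carrier GL_inv_carrier)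
  show "GL_inv b * GL_inv a \<in> carrier_mat n n" using c by simp
  have "GL_inv b * GL_inv a * (a * b) = GL_inv b * ((GL_inv a * a) * b)"
    using c by (simp add: assoc_mult_mat[of _ n n _ n _ n])
  then show "GL_inv b * GL_inv a * (a * b) = 1\<^sub>m n"
    using a b c by (simp add: GL_inv_left)
qed

section \<open>Block triangular matrices and flags\<close>

definition block_upper_triangular :: "nat \<Rightarrow> nat \<Rightarrow> complex mat \<Rightarrow> bool" where
  "block_upper_triangular n m r \<longleftrightarrow> (\<forall>k<n. \<forall>l<m. m \<le> k \<longrightarrow> r $$ (k, l) = 0)"

lemma block_upper_triangular_mult:
  assumes a: "a \<in> carrier_mat n n" and b: "b \<in> carrier_mat n n"
    and "block_upper_triangular n m a" "block_upper_triangular n m b"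
  shows "block_upper_triangular n m (a * b)"
  unfolding block_upper_triangular_def
proof (intro allI impI)
  fix k l assume kl: "k < n" "l < m" "m \<le> k"
  have "a $$ (k, c) * b $$ (c, l) = 0" if "c < n" for c
    by (cases "c < m") (use assms kl that in \<open>auto simp: block_upper_triangular_def\<close>)
  then have "(\<Sum>c<n. a $$ (k, c) * b $$ (c, l)) = 0" by (meson lessThan_iff sum.neutral)
  then show "(a * b) $$ (k, l) = 0" using mult_mat_entry[OF a b] kl by simp
qed

lemma det_block_upper_triangular:
  assumes r: "r \<in> carrier_mat n n" and bu: "block_upper_triangular n m r" and mn: "m \<le> n"
  shows "det r = det (mat m m (\<lambda>(a, b). r $$ (a, b))) *
    det (mat (n - m) (n - m) (\<lambda>(a, b). r $$ (a + m, b + m)))"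
proof -
  have "four_block_mat (mat m m (\<lambda>(a, b). r $$ (a, b))) (mat m (n - m) (\<lambda>(a, b). r $$ (a, b + m)))
      (0\<^sub>m (n - m) m) (mat (n - m) (n - m) (\<lambda>(a, b). r $$ (a + m, b + m))) = r"
    by (rule eq_matI) (use r mn bu in \<open>auto simp: block_upper_triangular_def\<close>)
  then show ?thesis
    by (metis det_four_block_mat_lower_left_zero mat_carrier zero_carrier_mat)
qed

text \<open>The lower right diagonal block of \<open>r\<close> is invertible and annihilates the lower part of
  each of the first \<open>m\<close> columns of \<open>r\<^sup>-\<^sup>1\<close>.\<close>
lemma block_upper_triangular_GL_inv:
  assumes r: "r \<in> GL n" and bu: "block_upper_triangular n m r"
  shows "block_upper_triangular n m (GL_inv r)"
  unfolding block_upper_triangular_def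
proof (intro allI impI)
  fix k l assume k: "k < n" "m \<le> k" and l: "l < m"
  define C where "C = GL_inv r"
  have rc: "r \<in> carrier_mat n n" and Cc: "C \<in> carrier_mat n n" and rC: "r * C = 1\<^sub>m n"
    using r by (auto simp: C_def GL_carrier GL_inv_carrier GL_inv_right)
  have z: "r $$ (a, b) = 0" if "m \<le> a" "a < n" "b < m" for a b
    using bu that unfolding block_upper_triangular_def by blast
  have mn: "m \<le> n" using k by simp
  define A4 where "A4 = mat (n - m) (n - m) (\<lambda>(a, b). r $$ (a + m, b + m))"
  have d4: "det A4 \<noteq> 0"
    using det_block_upper_triangular[OF rc bu mn] r by (auto simp: A4_def GL_iff_det)
  have A4c: "A4 \<in> carrier_mat (n - m) (n - m)" unfolding A4_def by simp
  define y where "y = vec (n - m) (\<lambda>a. C $$ (a + m, l))"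
  have "A4 *\<^sub>v y = 0\<^sub>v (n - m)"
  proof (rule eq_vecI)
    fix a assume "a < dim_vec (0\<^sub>v (n - m) :: complex vec)"
    then have a: "a < n - m" by simp
    let ?f = "\<lambda>c. r $$ (a + m, c) * C $$ (c, l)"
    have "(A4 *\<^sub>v y) $ a = (\<Sum>c = m..<n. ?f c)"
      using a sum.shift_bounds_nat_ivl[of ?f 0 m "n - m"] mn
      by (simp add: A4_def y_def scalar_prod_def add.commute)
    also have "\<dots> = (\<Sum>c = 0..<n. ?f c)"
      using sum.atLeastLessThan_concat[of 0 m n ?f] mn z a by (simp add: sum.neutral)
    also have "\<dots> = (r * C) $$ (a + m, l)"
      using rc Cc a l mn by (simp add: scalar_prod_def)
    finally show "(A4 *\<^sub>v y) $ a = 0\<^sub>v (n - m) $ a" using rC a l by simp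
  qed (simp add: A4_def)
  then have "y = 0\<^sub>v (n - m)"
    using det_0_iff_vec_prod_zero[OF A4c] d4 by (force simp: y_def)
  then have "y $ (k - m) = 0" using k by simp
  moreover have "k - m + m = k" using k by simp
  ultimately show "GL_inv r $$ (k, l) = 0" using k by (simp add: y_def C_def)
qed

lemma upper_triangular_iff_block:
  assumes "b \<in> carrier_mat n n"
  shows "upper_triangular b \<longleftrightarrow> (\<forall>m. block_upper_triangular n m b)"
proof
  assume "upper_triangular b"
  then show "\<forall>m. block_upper_triangular n m b"
    using assms by (auto simp: block_upper_triangular_def intro: upper_triangularD)
next
  assume bu: "\<forall>m. block_upper_triangular n m b"
  show "upper_triangular b"
  proof (rule upper_triangularI)
    fix k l assume "l < k" "k < dim_row b"
    then show "b $$ (k, l) = 0" using bu[rule_format, of k] assms by (auto simp: block_upper_triangular_def)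
  qed
qed

lemma Borel_iff: "b \<in> Borel n \<longleftrightarrow> b \<in> GL n \<and> (\<forall>m. block_upper_triangular n m b)"
  unfolding Borel_def by (auto simp: GL_def upper_triangular_iff_block)

lemma Borel_mult: "a \<in> Borel n \<Longrightarrow> b \<in> Borel n \<Longrightarrow> a * b \<in> Borel n"
  by (simp add: Borel_iff GL_mult block_upper_triangular_mult GL_carrier)

lemma Borel_GL_inv: "b \<in> Borel n \<Longrightarrow> GL_inv b \<in> Borel n"
  by (simp add: Borel_iff GL_inv_GL block_upper_triangular_GL_inv)

lemma one_mat_Borel: "1\<^sub>m n \<in> Borel n"
  using GL_I[of "1\<^sub>m n" n "1\<^sub>m n"] by (simp add: Borel_def GL_def)

lemma flag_self: "g \<in> carrier_mat n n \<Longrightarrow> g \<in> flag n g"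
  unfolding flag_def using one_mat_Borel[of n] by force

lemma flag_mult_Borel:
  assumes g: "g \<in> carrier_mat n n" and b: "b \<in> Borel n"
  shows "flag n (g * b) = flag n g"
proof -
  have bc: "b \<in> carrier_mat n n" "GL_inv b \<in> carrier_mat n n"
    using b by (auto simp: Borel_iff GL_carrier GL_inv_carrier)
  have "g * b * c \<in> flag n g" if c: "c \<in> Borel n" for c
  proof -
    have "g * b * c = g * (b * c)"
      using g bc c by (simp add: assoc_mult_mat[of _ n n _ n _ n] Borel_iff GL_carrier)
    then show ?thesis unfolding flag_def using Borel_mult[OF b c] by blast
  qed
  moreover have "g * c \<in> flag n (g * b)" if c: "c \<in> Borel n" for c
  proof -
    have cc: "c \<in> carrier_mat n n" using c by (simp add: Borel_iff GL_carrier)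
    have "g * b * (GL_inv b * c) = g * ((b * GL_inv b) * c)"
      using g bc cc by (simp add: assoc_mult_mat[of _ n n _ n _ n])
    then have "g * c = g * b * (GL_inv b * c)"
      using b cc GL_inv_right[of b n] by (simp add: Borel_iff)
    then show ?thesis unfolding flag_def using Borel_mult[OF Borel_GL_inv[OF b] c] by blast
  qed
  ultimately show ?thesis unfolding flag_def by blast
qed

lemma flag_eq:
  assumes "g' \<in> carrier_mat n n" "g \<in> flag n g'"
  shows "flag n g = flag n g'"
proof -
  obtain b where "b \<in> Borel n" "g = g' * b" using assms(2) unfolding flag_def by blast
  then show ?thesis using flag_mult_Borel[OF assms(1)] by simp
qed

section \<open>The varieties \<open>X\<^bsub>H\<^sub>i\<^sub>j\<^esub>\<close> and their unions\<close>

lemma XK_eq: "XK n K = flag n ` {g \<in> GL n. GL_inv g * Eunit n 1 n * g \<in> K}"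
proof -
  have "(\<exists>h\<in>carrier_mat n n. h * g = 1\<^sub>m n \<and> g * h = 1\<^sub>m n \<and> h * Eunit n 1 n * g \<in> K)
      \<longleftrightarrow> GL_inv g * Eunit n 1 n * g \<in> K" if g: "g \<in> GL n" for g
    using GL_inv_eqI[OF g] GL_inv_carrier[OF GL_carrier[OF g]] GL_inv_left[OF g] GL_inv_right[OF g]
    by metis
  then show ?thesis unfolding XK_def by blast
qed

lemma XK_subset_flag_variety: "XK n K \<subseteq> flag_variety n"
  unfolding XK_def flag_variety_def by blast

lemma Eunit_carrier: "Eunit n k l \<in> carrier_mat n n"
  unfolding Eunit_def by simp

lemma Eunit_entry: "a < n \<Longrightarrow> b < n \<Longrightarrow> Eunit n k l $$ (a, b) = (if a = k - 1 \<and> b = l - 1 then 1 else 0)"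
  unfolding Eunit_def by simp

lemma conj_E1n_entry:
  assumes A: "A \<in> carrier_mat n n" and B: "B \<in> carrier_mat n n" and ab: "a < n" "b < n"
  shows "(A * Eunit n 1 n * B) $$ (a, b) = A $$ (a, 0) * B $$ (n - 1, b)"
proof -
  have AE: "(A * Eunit n 1 n) $$ (a, c) = (if c = n - 1 then A $$ (a, 0) else 0)" if c: "c < n" for c
    using mult_mat_entry[OF A Eunit_carrier ab(1) c]
      sum_eq_single_nonzero[of "{..<n}" 0 "\<lambda>d. A $$ (a, d) * Eunit n 1 n $$ (d, c)"] ab c
    by (simp add: Eunit_entry)
  have "(A * Eunit n 1 n * B) $$ (a, b) = (\<Sum>c<n. (A * Eunit n 1 n) $$ (a, c) * B $$ (c, b))"
    using mult_mat_entry[OF mult_carrier_mat[OF A Eunit_carrier] B ab] .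
  also have "\<dots> = (A * Eunit n 1 n) $$ (a, n - 1) * B $$ (n - 1, b)"
    using ab by (intro sum_eq_single_nonzero) (use AE in auto)
  finally show ?thesis using ab AE[of "n - 1"] by simp
qed

lemma GL_row_inv_col_sum:
  assumes "g \<in> GL n" "k < n" "l < n"
  shows "(\<Sum>c<n. g $$ (k, c) * GL_inv g $$ (c, l)) = (if k = l then 1 else 0)"
proof -
  have "(g * GL_inv g) $$ (k, l) = (\<Sum>c<n. g $$ (k, c) * GL_inv g $$ (c, l))"
    using assms by (intro mult_mat_entry) (auto simp: GL_carrier GL_inv_carrier)
  then show ?thesis using GL_inv_right[OF assms(1)] assms(2,3) by simp
qed

lemma GL_inv_row_col_sum:
  assumes "g \<in> GL n" "k < n" "l < n"
  shows "(\<Sum>c<n. GL_inv g $$ (k, c) * g $$ (c, l)) = (if k = l then 1 else 0)"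
proof -
  have "(GL_inv g * g) $$ (k, l) = (\<Sum>c<n. GL_inv g $$ (k, c) * g $$ (c, l))"
    using assms by (intro mult_mat_entry) (auto simp: GL_carrier GL_inv_carrier)
  then show ?thesis using GL_inv_left[OF assms(1)] assms(2,3) by simp
qed

lemma GL_inv_first_col_nonzero:
  assumes "g \<in> GL n" "0 < n"
  shows "\<exists>a<n. GL_inv g $$ (a, 0) \<noteq> 0"
proof (rule ccontr)
  assume "\<not> ?thesis"
  then show False using GL_row_inv_col_sum[OF assms(1), of 0 0] assms(2) by simp
qed

lemma GL_last_row_nonzero:
  assumes "g \<in> GL n" "0 < n"
  shows "\<exists>b<n. g $$ (n - 1, b) \<noteq> 0"
proof (rule ccontr)
  assume "\<not> ?thesis"
  then show False using GL_row_inv_col_sum[OF assms(1), of "n - 1" "n - 1"] assms(2) by simp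
qed

text \<open>\<open>g\<^sup>-\<^sup>1 E\<^sub>1\<^sub>n g\<close> is the rank one matrix (first column of \<open>g\<^sup>-\<^sup>1\<close>) (last row of \<open>g\<close>).\<close>
lemma conj_E1n_in_unit_span_iff:
  assumes g: "g \<in> GL n"
  shows "GL_inv g * Eunit n 1 n * g \<in> unit_span n P \<longleftrightarrow>
    (\<forall>a<n. \<forall>b<n. GL_inv g $$ (a, 0) \<noteq> 0 \<longrightarrow> g $$ (n - 1, b) \<noteq> 0 \<longrightarrow> (a + 1, b + 1) \<in> P)"
  using conj_E1n_entry[OF GL_inv_carrier[OF GL_carrier[OF g]] GL_carrier[OF g]]
    GL_inv_carrier[OF GL_carrier[OF g]] GL_carrier[OF g]
  unfolding unit_span_def by (auto simp: Eunit_carrier)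

text \<open>The preimage of \<open>X\<^bsub>H\<^sub>i\<^sub>j\<^esub>\<close> in \<open>GL\<^sub>n\<close>: \<open>g\<^sup>-\<^sup>1 e\<^sub>1 \<in> \<langle>e\<^sub>1, \<dots>, e\<^sub>i\<rangle>\<close> and
  \<open>e\<^sub>n\<^sup>T g \<in> \<langle>e\<^sub>j\<^sup>T, \<dots>, e\<^sub>n\<^sup>T\<rangle>\<close> (matrix indices are 0-based, \<open>i\<close> and \<open>j\<close> 1-based).\<close>
definition schubert_preimage :: "nat \<Rightarrow> nat \<Rightarrow> nat \<Rightarrow> complex mat set" where
  "schubert_preimage n i j = {g \<in> GL n. (\<forall>a<n. i \<le> a \<longrightarrow> GL_inv g $$ (a, 0) = 0) \<and>
     (\<forall>b<n. b + 1 < j \<longrightarrow> g $$ (n - 1, b) = 0)}"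

lemma schubert_preimage_GL: "g \<in> schubert_preimage n i j \<Longrightarrow> g \<in> GL n"
  unfolding schubert_preimage_def by blast

lemma conj_E1n_in_Hij_iff:
  assumes g: "g \<in> GL n" and n: "0 < n"
  shows "GL_inv g * Eunit n 1 n * g \<in> Hij n i j \<longleftrightarrow> g \<in> schubert_preimage n i j"
proof -
  obtain a0 b0 where "a0 < n" "GL_inv g $$ (a0, 0) \<noteq> 0" "b0 < n" "g $$ (n - 1, b0) \<noteq> 0"
    using GL_inv_first_col_nonzero[OF g n] GL_last_row_nonzero[OF g n] by blast
  then have "(\<forall>a<n. \<forall>b<n. GL_inv g $$ (a, 0) \<noteq> 0 \<longrightarrow> g $$ (n - 1, b) \<noteq> 0 \<longrightarrow>
        (a + 1, b + 1) \<in> Hij_pattern n i j) \<longleftrightarrow>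
      (\<forall>a<n. i \<le> a \<longrightarrow> GL_inv g $$ (a, 0) = 0) \<and> (\<forall>b<n. b + 1 < j \<longrightarrow> g $$ (n - 1, b) = 0)"
    unfolding Hij_pattern_def by (auto simp: not_less) (meson leD le_trans not_less_eq_eq)+
  then show ?thesis
    unfolding Hij_def conj_E1n_in_unit_span_iff[OF g] schubert_preimage_def using g by blast
qed

lemma XK_Hij: "0 < n \<Longrightarrow> XK n (Hij n i j) = flag n ` schubert_preimage n i j"
  unfolding XK_eq using conj_E1n_in_Hij_iff schubert_preimage_GL by blast

lemma schubert_preimage_mult_right:
  assumes g: "g \<in> schubert_preimage n i j" and r: "r \<in> GL n"
    and bu: "block_upper_triangular n i r" "block_upper_triangular n (j - 1) r"
  shows "g * r \<in> schubert_preimage n i j"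
proof -
  have gG: "g \<in> GL n" using g by (rule schubert_preimage_GL)
  have c: "g \<in> carrier_mat n n" "r \<in> carrier_mat n n" "GL_inv g \<in> carrier_mat n n"
    "GL_inv r \<in> carrier_mat n n" using gG r by (auto simp: GL_carrier GL_inv_carrier)
  have bu': "block_upper_triangular n i (GL_inv r)" by (rule block_upper_triangular_GL_inv[OF r bu(1)])
  have "GL_inv (g * r) $$ (a, 0) = 0" if a: "a < n" "i \<le> a" for a
  proof -
    have "GL_inv r $$ (a, c) * GL_inv g $$ (c, 0) = 0" if "c < n" for c
      using that a g bu' unfolding schubert_preimage_def block_upper_triangular_def
      by (cases "c < i") auto
    then show ?thesis
      using mult_mat_entry[OF c(4,3) a(1)] a by (simp add: GL_inv_mult[OF gG r] sum.neutral)
  qed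
  moreover have "(g * r) $$ (n - 1, b) = 0" if b: "b < n" "b + 1 < j" for b
  proof -
    have "g $$ (n - 1, c) * r $$ (c, b) = 0" if "c < n" for c
      using that b g bu(2) unfolding schubert_preimage_def block_upper_triangular_def
      by (cases "c + 1 < j") auto
    then show ?thesis using mult_mat_entry[OF c(1,2) _ b(1)] b by (simp add: sum.neutral)
  qed
  ultimately show ?thesis using GL_mult[OF gG r] unfolding schubert_preimage_def by blast
qed

lemma schubert_preimage_mult_Borel:
  "g \<in> schubert_preimage n i j \<Longrightarrow> b \<in> Borel n \<Longrightarrow> g * b \<in> schubert_preimage n i j"
  by (simp add: Borel_iff schubert_preimage_mult_right)

lemma flag_in_XK_Hij_iff:
  assumes n: "0 < n" and g: "g \<in> GL n"
  shows "flag n g \<in> XK n (Hij n i j) \<longleftrightarrow> g \<in> schubert_preimage n i j"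
proof
  assume "flag n g \<in> XK n (Hij n i j)"
  then obtain g' where g': "g' \<in> schubert_preimage n i j" "flag n g = flag n g'"
    using XK_Hij[OF n] by auto
  then have "g \<in> flag n g'" using flag_self[OF GL_carrier[OF g]] by simp
  then show "g \<in> schubert_preimage n i j"
    using schubert_preimage_mult_Borel[OF g'(1)] unfolding flag_def by blast
qed (simp add: XK_Hij[OF n])

lemma Union_XK_Hij:
  assumes "0 < n"
  shows "\<Union> (XK n (Hij n i j)) = schubert_preimage n i j"
proof -
  have "g \<in> flag n g" if "g \<in> schubert_preimage n i j" for g
    using flag_self[OF GL_carrier[OF schubert_preimage_GL[OF that]]] .
  moreover have "flag n g \<subseteq> schubert_preimage n i j" if "g \<in> schubert_preimage n i j" for g
    using schubert_preimage_mult_Borel[OF that] unfolding flag_def by blast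
  ultimately show ?thesis unfolding XK_Hij[OF assms] by blast
qed

text \<open>A rank one matrix supported in a union of the rectangles \<open>H\<^sub>i\<^sub>j\<close> is supported in a single
  one: the rectangle containing the position (last nonzero row, first nonzero column).\<close>
lemma conj_E1n_in_Hsum_iff:
  assumes g: "g \<in> GL n" and n: "0 < n"
  shows "GL_inv g * Eunit n 1 n * g \<in> Hsum n S \<longleftrightarrow> g \<in> (\<Union>(i, j)\<in>S. schubert_preimage n i j)"
proof
  assume h: "GL_inv g * Eunit n 1 n * g \<in> Hsum n S"
  define A where "A = {a. a < n \<and> GL_inv g $$ (a, 0) \<noteq> 0}"
  define B where "B = {b. b < n \<and> g $$ (n - 1, b) \<noteq> 0}"
  have A: "finite A" "A \<noteq> {}" and B: "finite B" "B \<noteq> {}"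
    using GL_inv_first_col_nonzero[OF g n] GL_last_row_nonzero[OF g n] by (auto simp: A_def B_def)
  have "Max A \<in> A" "Min B \<in> B" using A B by simp_all
  then have "Max A < n" "Min B < n" "GL_inv g $$ (Max A, 0) \<noteq> 0" "g $$ (n - 1, Min B) \<noteq> 0"
    by (simp_all add: A_def B_def)
  then have "(Max A + 1, Min B + 1) \<in> (\<Union>(i, j)\<in>S. Hij_pattern n i j)"
    using h[unfolded Hsum_def conj_E1n_in_unit_span_iff[OF g], rule_format] by blast
  then obtain i j where ij: "(i, j) \<in> S" "Max A + 1 \<le> i" "j \<le> Min B + 1"
    unfolding Hij_pattern_def by blast
  have "GL_inv g $$ (a, 0) = 0" if "a < n" "i \<le> a" for a
  proof (rule ccontr)
    assume "GL_inv g $$ (a, 0) \<noteq> 0"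
    then have "a \<in> A" using that by (simp add: A_def)
    then show False using that ij(2) Max_ge[OF A(1), of a] by linarith
  qed
  moreover have "g $$ (n - 1, b) = 0" if "b < n" "b + 1 < j" for b
  proof (rule ccontr)
    assume "g $$ (n - 1, b) \<noteq> 0"
    then have "b \<in> B" using that by (simp add: B_def)
    then show False using that ij(3) Min_le[OF B(1), of b] by linarith
  qed
  ultimately have "g \<in> schubert_preimage n i j"
    using g unfolding schubert_preimage_def by blast
  then show "g \<in> (\<Union>(i, j)\<in>S. schubert_preimage n i j)" using ij(1) by (intro UN_I) auto
next
  assume "g \<in> (\<Union>(i, j)\<in>S. schubert_preimage n i j)"
  then obtain i j where "(i, j) \<in> S" "GL_inv g * Eunit n 1 n * g \<in> Hij n i j"
    using conj_E1n_in_Hij_iff[OF g n] by blast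
  then show "GL_inv g * Eunit n 1 n * g \<in> Hsum n S"
    unfolding Hij_def Hsum_def unit_span_def by blast
qed

lemma XK_Hsum:
  assumes "0 < n"
  shows "XK n (Hsum n S) = (\<Union>(i, j)\<in>S. XK n (Hij n i j))"
proof -
  have "{g \<in> GL n. GL_inv g * Eunit n 1 n * g \<in> Hsum n S} =
      (\<Union>(i, j)\<in>S. schubert_preimage n i j)"
    using conj_E1n_in_Hsum_iff[OF _ assms] schubert_preimage_GL by (auto intro: rev_bexI)
  then show ?thesis unfolding XK_eq[of n "Hsum n S"] XK_Hij[OF assms]
    by (simp add: image_UN prod.case_distrib)
qed

lemma unit_span_mono: "P \<subseteq> Q \<Longrightarrow> unit_span n P \<subseteq> unit_span n Q"
  unfolding unit_span_def by blast

lemma Hij_mono: "i \<le> i' \<Longrightarrow> j' \<le> j \<Longrightarrow> Hij n i j \<subseteq> Hij n i' j'"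
  unfolding Hij_def by (rule unit_span_mono) (auto simp: Hij_pattern_def)

section \<open>Zariski closed sets of flags\<close>

lemma poly_fun_sum:
  "finite I \<Longrightarrow> (\<And>i. i \<in> I \<Longrightarrow> f i \<in> poly_fun n) \<Longrightarrow> (\<lambda>A. \<Sum>i\<in>I. f i A) \<in> poly_fun n"
proof (induction I rule: finite_induct)
  case empty
  then show ?case using poly_fun.const[of 0 n] by simp
next
  case (insert x F)
  then show ?case using poly_fun.add[of "f x" n "\<lambda>A. \<Sum>i\<in>F. f i A"] by simp
qed

lemma poly_fun_prod:
  "finite I \<Longrightarrow> (\<And>i. i \<in> I \<Longrightarrow> f i \<in> poly_fun n) \<Longrightarrow> (\<lambda>A. \<Prod>i\<in>I. f i A) \<in> poly_fun n"
proof (induction I rule: finite_induct)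
  case empty
  then show ?case using poly_fun.const[of 1 n] by simp
next
  case (insert x F)
  then show ?case using poly_fun.mult[of "f x" n "\<lambda>A. \<Prod>i\<in>F. f i A"] by simp
qed

lemma poly_fun_det_mat:
  assumes "\<And>k l. k < m \<Longrightarrow> l < m \<Longrightarrow> (\<lambda>A. f A k l) \<in> poly_fun n"
  shows "(\<lambda>A. det (mat m m (\<lambda>(k, l). f A k l))) \<in> poly_fun n"
proof -
  have "(\<lambda>A. \<Sum>p\<in>{p. p permutes {0..<m}}. signof p * (\<Prod>k = 0..<m. f A k (p k))) \<in> poly_fun n"
  proof (intro poly_fun_sum poly_fun.mult poly_fun.const poly_fun_prod finite_permutations)
    fix p k assume "p \<in> {p. p permutes {0..<m}}" "k \<in> {0..<m}"
    then show "(\<lambda>A. f A k (p k)) \<in> poly_fun n"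
      using assms permutes_in_image by fastforce
  qed simp_all
  moreover have "det (mat m m (\<lambda>(k, l). f A k l)) =
      (\<Sum>p\<in>{p. p permutes {0..<m}}. signof p * (\<Prod>k = 0..<m. f A k (p k)))" for A
    unfolding det_def'[OF mat_carrier]
    by (intro sum.cong refl arg_cong[where f = "\<lambda>x. _ * x"] prod.cong)
      (auto dest: permutes_in_image)
  ultimately show ?thesis by simp
qed

lemma cofactor_poly_fun:
  assumes "b < n" "a < n"
  shows "\<exists>f\<in>poly_fun n. \<forall>A\<in>carrier_mat n n. f A = cofactor A b a"
proof
  let ?idx = "\<lambda>c k. if k < c then k else Suc k"
  show "(\<lambda>A. (-1) ^ (b + a) * det (mat (n - 1) (n - 1) (\<lambda>(k, l). A $$ (?idx b k, ?idx a l))))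
      \<in> poly_fun n"
    using assms by (intro poly_fun.mult poly_fun.const poly_fun_det_mat poly_fun.coord) auto
  show "\<forall>A\<in>carrier_mat n n.
      (-1) ^ (b + a) * det (mat (n - 1) (n - 1) (\<lambda>(k, l). A $$ (?idx b k, ?idx a l))) = cofactor A b a"
    by (simp add: cofactor_def mat_delete_def)
qed

lemma det_poly_fun: "\<exists>f\<in>poly_fun n. \<forall>A\<in>carrier_mat n n. f A = det A"
proof -
  have "(\<lambda>A. det (mat n n (\<lambda>(k, l). A $$ (k, l)))) \<in> poly_fun n"
    by (intro poly_fun_det_mat poly_fun.coord)
  moreover have "mat n n (\<lambda>(k, l). A $$ (k, l)) = A" if "A \<in> carrier_mat n n" for A :: "complex mat"
    using that by (intro eq_matI) auto
  ultimately show ?thesis by (intro bexI[of _ "\<lambda>A. det (mat n n (\<lambda>(k, l). A $$ (k, l)))"]) auto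
qed

lemma GL_inv_entry_eq_zero_iff:
  assumes "g \<in> GL n" "a < n" "b < n"
  shows "GL_inv g $$ (a, b) = 0 \<longleftrightarrow> cofactor g b a = 0"
  using assms by (auto simp: GL_inv_def adj_mat_def GL_iff_det)

lemma flag_closed_XK_Hij:
  assumes n: "0 < n"
  shows "flag_closed n (XK n (Hij n i j))"
proof -
  obtain cf where cf: "\<And>a. a < n \<Longrightarrow> cf a \<in> poly_fun n"
    "\<And>a A. a < n \<Longrightarrow> A \<in> carrier_mat n n \<Longrightarrow> cf a A = cofactor A 0 a"
    using cofactor_poly_fun[OF n] by metis
  define F where "F = cf ` {a. a < n \<and> i \<le> a} \<union> (\<lambda>b A. A $$ (n - 1, b)) ` {b. b < n \<and> b + 1 < j}"
  have "F \<subseteq> poly_fun n" using cf(1) n unfolding F_def by (auto intro: poly_fun.coord)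
  moreover have "(\<forall>f\<in>F. f g = 0) \<longleftrightarrow>
      (\<forall>a<n. i \<le> a \<longrightarrow> GL_inv g $$ (a, 0) = 0) \<and> (\<forall>b<n. b + 1 < j \<longrightarrow> g $$ (n - 1, b) = 0)"
    if g: "g \<in> GL n" for g
    using GL_inv_entry_eq_zero_iff[OF g _ n] cf(2)[OF _ GL_carrier[OF g]] unfolding F_def
    by (auto simp: ball_Un dest!: ball_imageD)
  then have "schubert_preimage n i j = {g \<in> GL n. \<forall>f\<in>F. f g = 0}"
    unfolding schubert_preimage_def by auto
  ultimately show ?thesis
    unfolding flag_closed_def zariski_closed_GL_def Union_XK_Hij[OF n]
    using XK_subset_flag_variety by blast
qed

lemma flag_closed_empty: "flag_closed n {}"
  unfolding flag_closed_def zariski_closed_GL_def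
  by (auto intro!: exI[of _ "{\<lambda>_. 1}"] poly_fun.const)

text \<open>The union is cut out by the pairwise products of the defining polynomials.\<close>
lemma flag_closed_Un:
  assumes "flag_closed n Z1" "flag_closed n Z2"
  shows "flag_closed n (Z1 \<union> Z2)"
proof -
  obtain F1 where F1: "F1 \<subseteq> poly_fun n" "\<Union>Z1 = {g \<in> GL n. \<forall>f\<in>F1. f g = 0}"
    using assms(1) unfolding flag_closed_def zariski_closed_GL_def by blast
  obtain F2 where F2: "F2 \<subseteq> poly_fun n" "\<Union>Z2 = {g \<in> GL n. \<forall>f\<in>F2. f g = 0}"
    using assms(2) unfolding flag_closed_def zariski_closed_GL_def by blast
  define F where "F = {(\<lambda>A. f1 A * f2 A) | f1 f2. f1 \<in> F1 \<and> f2 \<in> F2}"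
  have "F \<subseteq> poly_fun n" unfolding F_def using F1 F2 poly_fun.mult by blast
  moreover have "g \<in> \<Union>Z1 \<or> g \<in> \<Union>Z2" if g: "g \<in> GL n" "\<forall>f\<in>F. f g = 0" for g
  proof (rule ccontr)
    assume "\<not> ?thesis"
    then obtain f1 f2 where "f1 \<in> F1" "f1 g \<noteq> 0" "f2 \<in> F2" "f2 g \<noteq> 0"
      using F1(2) F2(2) g(1) by auto
    moreover from this have "(\<lambda>A. f1 A * f2 A) \<in> F" unfolding F_def by blast
    ultimately show False using bspec[OF g(2)] by force
  qed
  then have "\<Union>(Z1 \<union> Z2) = {g \<in> GL n. \<forall>f\<in>F. f g = 0}"
    using F1(2) F2(2) unfolding F_def by auto
  ultimately show ?thesis using assms unfolding flag_closed_def zariski_closed_GL_def by blast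
qed

lemma flag_closed_UN:
  "finite I \<Longrightarrow> (\<And>s. s \<in> I \<Longrightarrow> flag_closed n (X s)) \<Longrightarrow> flag_closed n (\<Union>s\<in>I. X s)"
  by (induction I rule: finite_induct) (simp_all add: flag_closed_empty flag_closed_Un)

section \<open>Irreducibility through polynomial curves\<close>

definition univariate_poly :: "(complex \<Rightarrow> complex) \<Rightarrow> bool" where
  "univariate_poly f \<longleftrightarrow> (\<exists>p. f = poly p)"

lemma univariate_poly_const: "univariate_poly (\<lambda>t. c)"
  unfolding univariate_poly_def by (intro exI[of _ "[:c:]"]) auto

lemma univariate_poly_id: "univariate_poly (\<lambda>t. t)"
  unfolding univariate_poly_def by (intro exI[of _ "[:0, 1:]"]) auto

lemma univariate_poly_add:
  assumes "univariate_poly f" "univariate_poly g"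
  shows "univariate_poly (\<lambda>t. f t + g t)"
proof -
  obtain p q where "f = poly p" "g = poly q" using assms unfolding univariate_poly_def by blast
  then have "(\<lambda>t. f t + g t) = poly (p + q)" by auto
  then show ?thesis unfolding univariate_poly_def by blast
qed

lemma univariate_poly_mult:
  assumes "univariate_poly f" "univariate_poly g"
  shows "univariate_poly (\<lambda>t. f t * g t)"
proof -
  obtain p q where "f = poly p" "g = poly q" using assms unfolding univariate_poly_def by blast
  then have "(\<lambda>t. f t * g t) = poly (p * q)" by auto
  then show ?thesis unfolding univariate_poly_def by blast
qed

lemma univariate_poly_sum:
  "finite I \<Longrightarrow> (\<And>i. i \<in> I \<Longrightarrow> univariate_poly (f i)) \<Longrightarrow> univariate_poly (\<lambda>t. \<Sum>i\<in>I. f i t)"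
  by (induction I rule: finite_induct) (simp_all add: univariate_poly_const univariate_poly_add)

lemma univariate_poly_common_nonzero:
  assumes "univariate_poly f" "univariate_poly g" "f s \<noteq> 0" "g t \<noteq> 0"
  shows "\<exists>u. f u \<noteq> 0 \<and> g u \<noteq> 0"
proof -
  obtain p q where pq: "f = poly p" "g = poly q" using assms(1,2) unfolding univariate_poly_def by blast
  then have "p * q \<noteq> 0" using assms(3,4) by auto
  then obtain u where "poly (p * q) u \<noteq> 0" using poly_all_0_iff_0 by blast
  then show ?thesis using pq by auto
qed

definition poly_curve :: "nat \<Rightarrow> (complex \<Rightarrow> complex mat) \<Rightarrow> bool" where
  "poly_curve n \<gamma> \<longleftrightarrow> (\<forall>t. \<gamma> t \<in> carrier_mat n n) \<and> (\<forall>a<n. \<forall>b<n. univariate_poly (\<lambda>t. \<gamma> t $$ (a, b)))"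

lemma univariate_poly_along_curve:
  assumes "f \<in> poly_fun n" "poly_curve n \<gamma>"
  shows "univariate_poly (\<lambda>t. f (\<gamma> t))"
  using assms(1)
proof (induction rule: poly_fun.induct)
  case (coord a b)
  then show ?case using assms(2) unfolding poly_curve_def by blast
qed (simp_all add: univariate_poly_const univariate_poly_add univariate_poly_mult)

lemma univariate_poly_det_along_curve:
  assumes "poly_curve n \<gamma>"
  shows "univariate_poly (\<lambda>t. det (\<gamma> t))"
proof -
  obtain f where f: "f \<in> poly_fun n" "\<forall>A\<in>carrier_mat n n. f A = det A"
    using det_poly_fun by blast
  have "(\<lambda>t. f (\<gamma> t)) = (\<lambda>t. det (\<gamma> t))" using f(2) assms unfolding poly_curve_def by auto
  then show ?thesis using univariate_poly_along_curve[OF f(1) assms] by simp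
qed

lemma poly_curve_const: "A \<in> carrier_mat n n \<Longrightarrow> poly_curve n (\<lambda>t. A)"
  unfolding poly_curve_def by (simp add: univariate_poly_const)

lemma poly_curve_line:
  assumes "A \<in> carrier_mat n n" "B \<in> carrier_mat n n"
  shows "poly_curve n (\<lambda>t. A + t \<cdot>\<^sub>m B)"
  using assms unfolding poly_curve_def
  by (auto intro!: univariate_poly_add univariate_poly_mult univariate_poly_const univariate_poly_id)

lemma poly_curve_mult:
  assumes "poly_curve n \<gamma>" "poly_curve n \<delta>"
  shows "poly_curve n (\<lambda>t. \<gamma> t * \<delta> t)"
  unfolding poly_curve_def
proof (intro conjI allI impI)
  fix t show "\<gamma> t * \<delta> t \<in> carrier_mat n n"
    using assms unfolding poly_curve_def by (meson mult_carrier_mat)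
next
  fix a b assume ab: "a < n" "b < n"
  have "univariate_poly (\<lambda>t. \<Sum>c<n. \<gamma> t $$ (a, c) * \<delta> t $$ (c, b))"
    using assms ab by (intro univariate_poly_sum univariate_poly_mult) (auto simp: poly_curve_def)
  moreover have "(\<gamma> t * \<delta> t) $$ (a, b) = (\<Sum>c<n. \<gamma> t $$ (a, c) * \<delta> t $$ (c, b))" for t
    using assms ab unfolding poly_curve_def by (intro mult_mat_entry) auto
  ultimately show "univariate_poly (\<lambda>t. (\<gamma> t * \<delta> t) $$ (a, b))" by simp
qed

definition curve_generically_in :: "nat \<Rightarrow> (complex \<Rightarrow> complex mat) \<Rightarrow> complex mat set \<Rightarrow> bool" where
  "curve_generically_in n \<gamma> T \<longleftrightarrow> poly_curve n \<gamma> \<and>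
     (\<exists>q. univariate_poly q \<and> (\<exists>t. q t \<noteq> 0) \<and> (\<forall>t. q t \<noteq> 0 \<longrightarrow> \<gamma> t \<in> T))"

lemma curve_generically_in_common_nonzero:
  assumes \<gamma>: "curve_generically_in n \<gamma> T" and fg: "f \<in> poly_fun n" "g \<in> poly_fun n"
    and nz: "f (\<gamma> s) \<noteq> 0" "g (\<gamma> t) \<noteq> 0"
  shows "\<exists>c\<in>T. f c \<noteq> 0 \<and> g c \<noteq> 0"
proof -
  obtain q t0 where q: "univariate_poly q" "q t0 \<noteq> 0" "\<And>t. q t \<noteq> 0 \<Longrightarrow> \<gamma> t \<in> T"
    using \<gamma> unfolding curve_generically_in_def by blast
  have pf: "univariate_poly (\<lambda>t. f (\<gamma> t))" "univariate_poly (\<lambda>t. g (\<gamma> t))"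
    using fg \<gamma> univariate_poly_along_curve unfolding curve_generically_in_def by blast+
  obtain u where "f (\<gamma> u) \<noteq> 0" "q u \<noteq> 0"
    using univariate_poly_common_nonzero[OF pf(1) q(1) nz(1) q(2)] by blast
  then obtain v where "f (\<gamma> v) * q v \<noteq> 0" "g (\<gamma> v) \<noteq> 0"
    using univariate_poly_common_nonzero[OF univariate_poly_mult[OF pf(1) q(1)] pf(2) _ nz(2)] by auto
  then show ?thesis using q(3)[of v] by auto
qed

text \<open>Irreducibility in the Zariski topology, phrased through non-vanishing of polynomials.\<close>
definition poly_irreducible :: "nat \<Rightarrow> complex mat set \<Rightarrow> bool" where
  "poly_irreducible n P \<longleftrightarrow> (\<forall>f\<in>poly_fun n. \<forall>g\<in>poly_fun n.
     (\<exists>a\<in>P. f a \<noteq> 0) \<longrightarrow> (\<exists>b\<in>P. g b \<noteq> 0) \<longrightarrow> (\<exists>c\<in>P. f c \<noteq> 0 \<and> g c \<noteq> 0))"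

definition curve_connected :: "nat \<Rightarrow> complex mat set \<Rightarrow> bool" where
  "curve_connected n T \<longleftrightarrow> (\<forall>a\<in>T. \<forall>b\<in>T. \<exists>\<gamma>. \<gamma> 0 = a \<and> \<gamma> 1 = b \<and> curve_generically_in n \<gamma> T)"

lemma curve_connected_imp_poly_irreducible:
  assumes "curve_connected n T"
  shows "poly_irreducible n T"
  unfolding poly_irreducible_def
proof (intro ballI impI)
  fix f g assume fg: "f \<in> poly_fun n" "g \<in> poly_fun n"
    and "\<exists>a\<in>T. f a \<noteq> 0" "\<exists>b\<in>T. g b \<noteq> 0"
  then obtain a b where ab: "a \<in> T" "f a \<noteq> 0" "b \<in> T" "g b \<noteq> 0" by blast
  then obtain \<gamma> where "\<gamma> 0 = a" "\<gamma> 1 = b" "curve_generically_in n \<gamma> T"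
    using assms unfolding curve_connected_def by blast
  then show "\<exists>c\<in>T. f c \<noteq> 0 \<and> g c \<noteq> 0"
    using curve_generically_in_common_nonzero[OF _ fg, of \<gamma> T 0 1] ab by simp
qed

lemma poly_irreducible_if_curves_into:
  assumes TP: "T \<subseteq> P" and T: "poly_irreducible n T"
    and curves: "\<And>a. a \<in> P \<Longrightarrow> \<exists>\<gamma>. \<gamma> 0 = a \<and> curve_generically_in n \<gamma> T"
  shows "poly_irreducible n P"
proof -
  have into_T: "\<exists>b\<in>T. f b \<noteq> 0" if f: "f \<in> poly_fun n" and a: "a \<in> P" "f a \<noteq> 0" for f a
  proof -
    obtain \<gamma> where "\<gamma> 0 = a" "curve_generically_in n \<gamma> T" using curves[OF a(1)] by blast
    then show ?thesis using curve_generically_in_common_nonzero[OF _ f f, of \<gamma> T 0 0] a by auto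
  qed
  show ?thesis
    unfolding poly_irreducible_def
  proof (intro ballI impI)
    fix f g assume fg: "f \<in> poly_fun n" "g \<in> poly_fun n"
      and "\<exists>a\<in>P. f a \<noteq> 0" "\<exists>b\<in>P. g b \<noteq> 0"
    then have "\<exists>a\<in>T. f a \<noteq> 0" "\<exists>b\<in>T. g b \<noteq> 0" using into_T by blast+
    then obtain c where "c \<in> T" "f c \<noteq> 0" "g c \<noteq> 0" using T fg unfolding poly_irreducible_def by blast
    then show "\<exists>c\<in>P. f c \<noteq> 0 \<and> g c \<noteq> 0" using TP by blast
  qed
qed

lemma flag_closed_equations:
  assumes "flag_closed n Z"
  shows "\<exists>F\<subseteq>poly_fun n. \<forall>g\<in>GL n. flag n g \<in> Z \<longleftrightarrow> (\<forall>f\<in>F. f g = 0)"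
proof -
  obtain F where F: "F \<subseteq> poly_fun n" "\<Union>Z = {g \<in> GL n. \<forall>f\<in>F. f g = 0}"
    using assms unfolding flag_closed_def zariski_closed_GL_def by blast
  have "flag n g \<in> Z \<longleftrightarrow> g \<in> \<Union>Z" if g: "g \<in> GL n" for g
  proof
    assume "flag n g \<in> Z"
    then show "g \<in> \<Union>Z" using flag_self[OF GL_carrier[OF g]] by blast
  next
    assume "g \<in> \<Union>Z"
    then obtain z where z: "z \<in> Z" "g \<in> z" by blast
    then obtain g' where "g' \<in> GL n" "z = flag n g'"
      using assms unfolding flag_closed_def flag_variety_def by blast
    then show "flag n g \<in> Z" using flag_eq[OF GL_carrier, of g' n g] z by simp
  qed
  moreover have "g \<in> \<Union>Z \<longleftrightarrow> (\<forall>f\<in>F. f g = 0)" if "g \<in> GL n" for g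
    using F(2) that by simp
  ultimately show ?thesis using F(1) by (intro exI[of _ F]) simp
qed

lemma flag_irreducible_image:
  assumes P: "P \<subseteq> GL n" "P \<noteq> {}" and irr: "poly_irreducible n P"
  shows "flag_irreducible n (flag n ` P)"
  unfolding flag_irreducible_def
proof (intro conjI allI impI)
  show "flag n ` P \<noteq> {}" "flag n ` P \<subseteq> flag_variety n"
    using P unfolding flag_variety_def by auto
next
  fix Z1 Z2 assume Z: "flag_closed n Z1 \<and> flag_closed n Z2 \<and> flag n ` P \<subseteq> Z1 \<union> Z2"
  obtain F1 where F1: "F1 \<subseteq> poly_fun n" "\<forall>g\<in>GL n. flag n g \<in> Z1 \<longleftrightarrow> (\<forall>f\<in>F1. f g = 0)"
    using flag_closed_equations[of n Z1] Z by blast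
  obtain F2 where F2: "F2 \<subseteq> poly_fun n" "\<forall>g\<in>GL n. flag n g \<in> Z2 \<longleftrightarrow> (\<forall>f\<in>F2. f g = 0)"
    using flag_closed_equations[of n Z2] Z by blast
  show "flag n ` P \<subseteq> Z1 \<or> flag n ` P \<subseteq> Z2"
  proof (rule ccontr)
    assume "\<not> ?thesis"
    then obtain a b where "a \<in> P" "flag n a \<notin> Z1" "b \<in> P" "flag n b \<notin> Z2" by blast
    then obtain f1 f2 where f: "f1 \<in> F1" "f1 a \<noteq> 0" "f2 \<in> F2" "f2 b \<noteq> 0"
      using F1(2) F2(2) P(1) by blast
    then have "f1 \<in> poly_fun n" "f2 \<in> poly_fun n" "\<exists>a\<in>P. f1 a \<noteq> 0" "\<exists>b\<in>P. f2 b \<noteq> 0"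
      using F1(1) F2(1) \<open>a \<in> P\<close> \<open>b \<in> P\<close> by auto
    then obtain c where c: "c \<in> P" "f1 c \<noteq> 0" "f2 c \<noteq> 0"
      using irr unfolding poly_irreducible_def by blast
    have "c \<in> GL n" using c(1) P(1) by blast
    then have "flag n c \<notin> Z1" "flag n c \<notin> Z2" using F1(2) F2(2) f(1,3) c(2,3) by auto
    then show False using Z c(1) by blast
  qed
qed

lemma flag_irreducible_subset_finite_union:
  assumes "finite I" "\<And>s. s \<in> I \<Longrightarrow> flag_closed n (X s)"
    and Y: "flag_irreducible n Y" "Y \<subseteq> (\<Union>s\<in>I. X s)"
  shows "\<exists>s\<in>I. Y \<subseteq> X s"
  using assms(1,2) Y(2)
proof (induction I rule: finite_induct)
  case empty
  then show ?case using Y(1) unfolding flag_irreducible_def by simp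
next
  case (insert s I)
  have "flag_closed n (X s)" "flag_closed n (\<Union>s\<in>I. X s)"
    using insert by (auto intro: flag_closed_UN)
  moreover have "Y \<subseteq> X s \<union> (\<Union>s\<in>I. X s)" using insert.prems(2) by simp
  ultimately have "Y \<subseteq> X s \<or> Y \<subseteq> (\<Union>s\<in>I. X s)"
    using Y(1) unfolding flag_irreducible_def by blast
  then show ?case using insert.IH insert.prems(1) by blast
qed

lemma irreducible_components_finite_union:
  assumes fin: "finite I" and closed: "\<And>s. s \<in> I \<Longrightarrow> flag_closed n (X s)"
    and irr: "\<And>s. s \<in> I \<Longrightarrow> flag_irreducible n (X s)"
    and incomparable: "\<And>s t. s \<in> I \<Longrightarrow> t \<in> I \<Longrightarrow> X s \<subseteq> X t \<Longrightarrow> s = t"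
  shows "{Y. irreducible_component n (\<Union>s\<in>I. X s) Y} = X ` I"
proof -
  have cover: "\<exists>s\<in>I. Y \<subseteq> X s" if "flag_irreducible n Y" "Y \<subseteq> (\<Union>s\<in>I. X s)" for Y
    using flag_irreducible_subset_finite_union[OF fin closed that] by blast
  have "irreducible_component n (\<Union>s\<in>I. X s) Y \<longleftrightarrow> Y \<in> X ` I" for Y
  proof
    assume Y: "irreducible_component n (\<Union>s\<in>I. X s) Y"
    then have "flag_irreducible n Y" "Y \<subseteq> (\<Union>s\<in>I. X s)"
      unfolding irreducible_component_def by simp_all
    then obtain s where s: "s \<in> I" "Y \<subseteq> X s" using cover by blast
    have "X s \<subseteq> (\<Union>s\<in>I. X s)" using s(1) by blast
    then have "X s = Y"
      using Y irr[OF s(1)] s(2) unfolding irreducible_component_def by blast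
    then show "Y \<in> X ` I" using s(1) by blast
  next
    assume "Y \<in> X ` I"
    then obtain s where s: "s \<in> I" "Y = X s" by blast
    have "Y' = Y" if Y': "Y \<subseteq> Y'" "Y' \<subseteq> (\<Union>s\<in>I. X s)" "flag_irreducible n Y'" for Y'
    proof -
      obtain t where t: "t \<in> I" "Y' \<subseteq> X t" using cover Y'(2,3) by blast
      then have "s = t" using incomparable[OF s(1)] Y'(1) s(2) by blast
      then show ?thesis using t(2) Y'(1) s(2) by blast
    qed
    moreover have "Y \<subseteq> (\<Union>s\<in>I. X s)" using s by blast
    ultimately show "irreducible_component n (\<Union>s\<in>I. X s) Y"
      unfolding irreducible_component_def using s irr by blast
  qed
  then show ?thesis by blast
qed

section \<open>Irreducibility of \<open>X\<^bsub>H\<^sub>i\<^sub>j\<^esub>\<close>\<close>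

definition GL_vanishing :: "nat \<Rightarrow> (nat \<times> nat) set \<Rightarrow> complex mat set" where
  "GL_vanishing n Z = {x \<in> GL n. \<forall>k<n. \<forall>l<n. (k, l) \<in> Z \<longrightarrow> x $$ (k, l) = 0}"

lemma GL_vanishing_carrier: "x \<in> GL_vanishing n Z \<Longrightarrow> x \<in> carrier_mat n n"
  unfolding GL_vanishing_def by (simp add: GL_carrier)

lemma GL_vanishing_segment:
  assumes x: "x \<in> GL_vanishing n Z" and y: "y \<in> GL_vanishing n Z"
    and d: "det (x + t \<cdot>\<^sub>m (y - x)) \<noteq> 0"
  shows "x + t \<cdot>\<^sub>m (y - x) \<in> GL_vanishing n Z"
  using GL_vanishing_carrier[OF x] GL_vanishing_carrier[OF y] x y d
  unfolding GL_vanishing_def by (auto simp: GL_iff_det)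

text \<open>The straight segment between two points of \<open>GL_vanishing n Z\<close> stays in it wherever its
  determinant does not vanish; the product of two such segments joins any two products.\<close>
lemma curve_connected_GL_vanishing_products:
  "curve_connected n {d * r | d r. d \<in> GL_vanishing n Z1 \<and> r \<in> GL_vanishing n Z2}"
  unfolding curve_connected_def
proof (intro ballI)
  let ?T = "{d * r | d r. d \<in> GL_vanishing n Z1 \<and> r \<in> GL_vanishing n Z2}"
  fix a b assume "a \<in> ?T" "b \<in> ?T"
  then obtain d1 r1 d2 r2 where ab: "a = d1 * r1" "b = d2 * r2"
    and mem: "d1 \<in> GL_vanishing n Z1" "r1 \<in> GL_vanishing n Z2"
      "d2 \<in> GL_vanishing n Z1" "r2 \<in> GL_vanishing n Z2" by blast
  have c: "d1 \<in> carrier_mat n n" "r1 \<in> carrier_mat n n" "d2 \<in> carrier_mat n n" "r2 \<in> carrier_mat n n"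
    using mem by (auto simp: GL_vanishing_carrier)
  define \<delta> where "\<delta> t = d1 + t \<cdot>\<^sub>m (d2 - d1)" for t
  define \<rho> where "\<rho> t = r1 + t \<cdot>\<^sub>m (r2 - r1)" for t
  have curves: "poly_curve n \<delta>" "poly_curve n \<rho>"
    unfolding \<delta>_def \<rho>_def using c by (auto intro!: poly_curve_line)
  have ends: "\<delta> 0 = d1" "\<rho> 0 = r1" "\<delta> 1 = d2" "\<rho> 1 = r2"
    unfolding \<delta>_def \<rho>_def using c by (auto intro!: eq_matI)
  have "det (\<delta> 0) * det (\<rho> 0) \<noteq> 0"
    using mem(1,2) ends by (simp add: GL_vanishing_def GL_iff_det)
  moreover have "\<delta> t * \<rho> t \<in> ?T" if "det (\<delta> t) * det (\<rho> t) \<noteq> 0" for t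
    using that GL_vanishing_segment[OF mem(1,3)] GL_vanishing_segment[OF mem(2,4)]
    unfolding \<delta>_def \<rho>_def by auto
  ultimately have "curve_generically_in n (\<lambda>t. \<delta> t * \<rho> t) ?T"
    unfolding curve_generically_in_def using curves
    by (intro conjI poly_curve_mult exI[of _ "\<lambda>t. det (\<delta> t) * det (\<rho> t)"])
      (auto intro: univariate_poly_mult univariate_poly_det_along_curve)
  then show "\<exists>\<gamma>. \<gamma> 0 = a \<and> \<gamma> 1 = b \<and> curve_generically_in n \<gamma> ?T"
    using ab ends by (intro exI[of _ "\<lambda>t. \<delta> t * \<rho> t"]) simp
qed

text \<open>The two factors of the dense part of a Schubert variety: matrices whose \<open>i\<close>-th column
  is a multiple of \<open>e\<^sub>1\<close> and whose last row vanishes before the \<open>j\<close>-th entry, and the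
  parabolic subgroup stabilising \<open>\<langle>e\<^sub>1, \<dots>, e\<^sub>i\<rangle>\<close> and \<open>\<langle>e\<^sub>1, \<dots>, e\<^sub>j\<^sub>-\<^sub>1\<rangle>\<close>.\<close>
definition pivot_pattern :: "nat \<Rightarrow> nat \<Rightarrow> nat \<Rightarrow> (nat \<times> nat) set" where
  "pivot_pattern n i j = {(k, l). l = i - 1 \<and> k \<noteq> 0} \<union> {(k, l). k = n - 1 \<and> l + 1 < j}"

definition parabolic_pattern :: "nat \<Rightarrow> nat \<Rightarrow> (nat \<times> nat) set" where
  "parabolic_pattern i j = {(k, l). i \<le> k \<and> l < i} \<union> {(k, l). j - 1 \<le> k \<and> l + 1 < j}"

definition schubert_dense_part :: "nat \<Rightarrow> nat \<Rightarrow> nat \<Rightarrow> complex mat set" where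
  "schubert_dense_part n i j = {d * r | d r.
     d \<in> GL_vanishing n (pivot_pattern n i j) \<and> r \<in> GL_vanishing n (parabolic_pattern i j)}"

lemma GL_vanishing_parabolic_iff:
  "r \<in> GL_vanishing n (parabolic_pattern i j) \<longleftrightarrow>
     r \<in> GL n \<and> block_upper_triangular n i r \<and> block_upper_triangular n (j - 1) r"
  unfolding GL_vanishing_def parabolic_pattern_def block_upper_triangular_def by auto

lemma parabolic_GL_inv:
  "r \<in> GL_vanishing n (parabolic_pattern i j) \<Longrightarrow> GL_inv r \<in> GL_vanishing n (parabolic_pattern i j)"
  by (simp add: GL_vanishing_parabolic_iff GL_inv_GL block_upper_triangular_GL_inv)

lemma pivot_in_schubert_preimage:
  assumes d: "d \<in> GL_vanishing n (pivot_pattern n i j)" and i: "1 \<le> i" "i \<le> n"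
  shows "d \<in> schubert_preimage n i j"
proof -
  have dG: "d \<in> GL n" using d by (simp add: GL_vanishing_def)
  have im: "i - 1 < n" using i by simp
  have col: "GL_inv d $$ (a, 0) * d $$ (0, i - 1) = (if a = i - 1 then 1 else 0)" if a: "a < n" for a
  proof -
    have "(\<Sum>c<n. GL_inv d $$ (a, c) * d $$ (c, i - 1)) = GL_inv d $$ (a, 0) * d $$ (0, i - 1)"
      using d im by (intro sum_eq_single_nonzero) (auto simp: GL_vanishing_def pivot_pattern_def)
    then show ?thesis using GL_inv_row_col_sum[OF dG a im] by simp
  qed
  have "GL_inv d $$ (a, 0) = 0" if "a < n" "i \<le> a" for a
  proof -
    have "a \<noteq> i - 1" using that(2) i(1) by simp
    then show ?thesis using col[OF that(1)] col[OF im] by auto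
  qed
  moreover have "d $$ (n - 1, b) = 0" if "b < n" "b + 1 < j" for b
  proof -
    have "(n - 1, b) \<in> pivot_pattern n i j" "n - 1 < n" using that by (auto simp: pivot_pattern_def)
    then show ?thesis using d that(1) unfolding GL_vanishing_def by blast
  qed
  ultimately show ?thesis using dG unfolding schubert_preimage_def by blast
qed

lemma schubert_dense_part_subset:
  assumes "1 \<le> i" "i \<le> n"
  shows "schubert_dense_part n i j \<subseteq> schubert_preimage n i j"
  unfolding schubert_dense_part_def
  using pivot_in_schubert_preimage[OF _ assms] schubert_preimage_mult_right
  by (auto simp: GL_vanishing_parabolic_iff)

text \<open>The matrix sending \<open>e\<^sub>m\<close> to \<open>u\<close> and \<open>e\<^sub>c\<close> to \<open>e\<^sub>m\<close> and fixing the other standard basis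
  vectors; for \<open>c = m\<close> it just replaces the \<open>m\<close>-th column of the identity by \<open>u\<close>.\<close>
definition exchange_mat :: "nat \<Rightarrow> nat \<Rightarrow> nat \<Rightarrow> (nat \<Rightarrow> complex) \<Rightarrow> complex mat" where
  "exchange_mat n m c u = mat n n (\<lambda>(x, y).
     if y = m then u x else if y = c then (if x = m then 1 else 0) else (if x = y then 1 else 0))"

lemma exchange_mat_carrier: "exchange_mat n m c u \<in> carrier_mat n n"
  unfolding exchange_mat_def by simp

lemma exchange_mat_entry:
  "x < n \<Longrightarrow> y < n \<Longrightarrow> exchange_mat n m c u $$ (x, y) =
     (if y = m then u x else if y = c then (if x = m then 1 else 0) else (if x = y then 1 else 0))"
  unfolding exchange_mat_def by simp

lemma mult_exchange_mat_entry:
  assumes A: "A \<in> carrier_mat n n" and kl: "k < n" "l < n" and mc: "m < n" "c < n"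
  shows "(A * exchange_mat n m c u) $$ (k, l) =
    (if l = m then (\<Sum>y<n. A $$ (k, y) * u y) else if l = c then A $$ (k, m) else A $$ (k, l))"
proof -
  have "(A * exchange_mat n m c u) $$ (k, l) = (\<Sum>y<n. A $$ (k, y) * exchange_mat n m c u $$ (y, l))"
    using mult_mat_entry[OF A exchange_mat_carrier kl] .
  also have "\<dots> = (if l = m then (\<Sum>y<n. A $$ (k, y) * u y) else if l = c then A $$ (k, m) else A $$ (k, l))"
  proof -
    consider "l = m" | "l \<noteq> m" "l = c" | "l \<noteq> m" "l \<noteq> c" by blast
    then show ?thesis
    proof cases
      case 2
      then have "(\<Sum>y<n. A $$ (k, y) * exchange_mat n m c u $$ (y, l)) =
          A $$ (k, m) * exchange_mat n m c u $$ (m, l)"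
        using kl mc by (intro sum_eq_single_nonzero) (auto simp: exchange_mat_entry)
      then show ?thesis using 2 kl mc by (simp add: exchange_mat_entry)
    next
      case 3
      then have "(\<Sum>y<n. A $$ (k, y) * exchange_mat n m c u $$ (y, l)) =
          A $$ (k, l) * exchange_mat n m c u $$ (l, l)"
        using kl mc by (intro sum_eq_single_nonzero) (auto simp: exchange_mat_entry)
      then show ?thesis using 3 kl by (simp add: exchange_mat_entry)
    qed (use kl mc in \<open>auto simp: exchange_mat_entry intro: sum.cong\<close>)
  qed
  finally show ?thesis .
qed

text \<open>A vector in the kernel has vanishing \<open>m\<close>-th entry (look at row \<open>c\<close>, or at row \<open>m\<close> if
  \<open>c = m\<close>), hence vanishes.\<close>
lemma exchange_mat_GL:
  assumes mc: "m < n" "c < n" and u: "u c \<noteq> 0"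
  shows "exchange_mat n m c u \<in> GL n"
proof -
  let ?s = "exchange_mat n m c u"
  have "v = 0\<^sub>v n" if v: "v \<in> carrier_vec n" "?s *\<^sub>v v = 0\<^sub>v n" for v
  proof -
    have row: "u x * v $ m + (if c \<noteq> m \<and> x = m then v $ c else 0) +
        (if x \<noteq> m \<and> x \<noteq> c then v $ x else 0) = 0" if x: "x < n" for x
    proof -
      have "(?s *\<^sub>v v) $ x = (\<Sum>y<n. ?s $$ (x, y) * v $ y)"
        using v(1) x by (auto simp: scalar_prod_def exchange_mat_def atLeast0LessThan intro!: sum.cong)
      also have "\<dots> = (\<Sum>y<n. (if y = m then u x * v $ m else 0)
          + (if y = c then (if c \<noteq> m \<and> x = m then v $ c else 0) else 0)
          + (if y = x then (if x \<noteq> m \<and> x \<noteq> c then v $ x else 0) else 0))"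
        using x by (intro sum.cong) (auto simp: exchange_mat_entry)
      also have "\<dots> = u x * v $ m + (if c \<noteq> m \<and> x = m then v $ c else 0)
          + (if x \<noteq> m \<and> x \<noteq> c then v $ x else 0)"
        using mc x by (simp add: sum.distrib)
      finally show ?thesis using v(2) x by simp
    qed
    have vm: "v $ m = 0" using row[OF mc(2)] row[OF mc(1)] u by (cases "c = m") auto
    show ?thesis
    proof (rule eq_vecI)
      fix x assume "x < dim_vec (0\<^sub>v n :: complex vec)"
      then have x: "x < n" by simp
      then show "v $ x = 0\<^sub>v n $ x"
        using row[OF x] row[OF mc(1)] vm by (cases "x = m"; cases "x = c") auto
    qed (use v in simp)
  qed
  then have "det ?s \<noteq> 0" using det_0_iff_vec_prod_zero[OF exchange_mat_carrier] by blast
  then show ?thesis by (simp add: GL_iff_det exchange_mat_carrier)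
qed

text \<open>With \<open>u = a\<^sup>-\<^sup>1 e\<^sub>1\<close> and \<open>s\<close> the exchange matrix sending \<open>e\<^sub>i\<close> to \<open>u\<close> and \<open>e\<^sub>c\<close> to \<open>e\<^sub>i\<close>, the
  condition on \<open>c\<close> makes \<open>s\<close> parabolic and \<open>a s\<close> lies in the pivot set; then \<open>a = (a s) s\<^sup>-\<^sup>1\<close>.\<close>
lemma schubert_dense_part_memI:
  assumes a: "a \<in> schubert_preimage n i j" and i: "1 \<le> i" "i \<le> n" and j: "j \<le> n"
    and c: "c < i" "i < j \<or> j \<le> c + 1" "GL_inv a $$ (c, 0) \<noteq> 0"
  shows "a \<in> schubert_dense_part n i j"
proof -
  define m where "m = i - 1"
  define u where "u k = GL_inv a $$ (k, 0)" for k
  define s where "s = exchange_mat n m c u"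
  have mc: "m < n" "c < n" "m < i" using i c(1) by (auto simp: m_def)
  have aG: "a \<in> GL n" and ac: "a \<in> carrier_mat n n" using a by (auto simp: schubert_preimage_GL GL_carrier)
  have u0: "u k = 0" if "k < n" "i \<le> k" for k
    using a that unfolding schubert_preimage_def u_def by blast
  have v0: "a $$ (n - 1, l) = 0" if "l < n" "l + 1 < j" for l
    using a that unfolding schubert_preimage_def by blast
  have sG: "s \<in> GL n" unfolding s_def by (rule exchange_mat_GL[OF mc(1,2)]) (use c(3) in \<open>simp add: u_def\<close>)
  have "s \<in> GL_vanishing n (parabolic_pattern i j)"
    unfolding GL_vanishing_def parabolic_pattern_def s_def
    using sG[unfolded s_def] mc c(2) u0 by (auto simp: exchange_mat_entry m_def)
  then have r: "GL_inv s \<in> GL_vanishing n (parabolic_pattern i j)" by (rule parabolic_GL_inv)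
  have as: "(a * s) $$ (k, l) = (if l = m then (if k = 0 then 1 else 0) else if l = c then a $$ (k, m)
      else a $$ (k, l))" if "k < n" "l < n" for k l
    using mult_exchange_mat_entry[OF ac that mc(1,2)] GL_row_inv_col_sum[OF aG that(1), of 0] mc
    by (simp add: s_def u_def)
  have "a * s \<in> GL_vanishing n (pivot_pattern n i j)"
    unfolding GL_vanishing_def pivot_pattern_def
    using GL_mult[OF aG sG] as c(2) v0 mc i j by (auto simp: m_def)
  moreover have "a = a * s * GL_inv s"
    using ac sG by (simp add: assoc_mult_mat[of _ n n _ n _ n] GL_carrier GL_inv_carrier GL_inv_right)
  ultimately show ?thesis unfolding schubert_dense_part_def using r by blast
qed

lemma GL_inv_first_col_eqI:
  assumes g: "g \<in> GL n" and w: "w \<in> carrier_vec n" and gw: "g *\<^sub>v w = unit_vec n 0" and k: "k < n"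
  shows "GL_inv g $$ (k, 0) = w $ k"
proof -
  have gc: "g \<in> carrier_mat n n" "GL_inv g \<in> carrier_mat n n"
    using g by (auto simp: GL_carrier GL_inv_carrier)
  have "w = (GL_inv g * g) *\<^sub>v w" using w GL_inv_left[OF g] by simp
  also have "\<dots> = GL_inv g *\<^sub>v unit_vec n 0" using assoc_mult_mat_vec[OF gc(2,1) w] gw by simp
  finally show ?thesis using gc k by simp
qed

definition transvection_curve :: "nat \<Rightarrow> complex mat \<Rightarrow> nat \<Rightarrow> (nat \<Rightarrow> complex) \<Rightarrow> complex \<Rightarrow> complex mat" where
  "transvection_curve n a c x t = a + t \<cdot>\<^sub>m (a * mat n n (\<lambda>(k, l). if l = c then x k else 0))"

lemma transvection_curve_entry:
  assumes "a \<in> carrier_mat n n" "k < n" "l < n"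
  shows "transvection_curve n a c x t $$ (k, l) =
    a $$ (k, l) + (if l = c then t * (\<Sum>z<n. a $$ (k, z) * x z) else 0)"
  using assms mult_mat_entry[OF assms(1) mat_carrier, of k l "\<lambda>(k, l). if l = c then x k else 0"]
  by (auto simp: transvection_curve_def intro: sum.neutral)

lemma transvection_curve_poly_curve:
  "a \<in> carrier_mat n n \<Longrightarrow> poly_curve n (transvection_curve n a c x)"
  unfolding transvection_curve_def by (rule poly_curve_line) auto

lemma transvection_curve_0: "a \<in> carrier_mat n n \<Longrightarrow> transvection_curve n a c x 0 = a"
  unfolding transvection_curve_def by (intro eq_matI) auto

text \<open>Since \<open>x\<^sub>c = 0\<close>, the inverse of \<open>1 + t x e\<^sub>c\<^sup>T\<close> is \<open>1 - t x e\<^sub>c\<^sup>T\<close>, which moves the first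
  column \<open>u\<close> of \<open>a\<^sup>-\<^sup>1\<close> to \<open>u - t u\<^sub>c x\<close>.\<close>
lemma transvection_curve_mult_inv_first_col:
  assumes aG: "a \<in> GL n" and c: "c < n" "x c = 0"
  shows "transvection_curve n a c x t *\<^sub>v vec n (\<lambda>k. GL_inv a $$ (k, 0) - t * GL_inv a $$ (c, 0) * x k)
    = unit_vec n 0"
    (is "?g *\<^sub>v ?w = _")
proof (rule eq_vecI)
  let ?u = "\<lambda>k. GL_inv a $$ (k, 0)" and ?ax = "\<lambda>k. \<Sum>z<n. a $$ (k, z) * x z"
  have ac: "a \<in> carrier_mat n n" using aG by (rule GL_carrier)
  have gc: "?g \<in> carrier_mat n n" using ac by (simp add: transvection_curve_def)
  fix k assume "k < dim_vec (unit_vec n 0 :: complex vec)"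
  then have k: "k < n" by simp
  have "(?g *\<^sub>v ?w) $ k = (\<Sum>y<n. ?g $$ (k, y) * ?w $ y)"
    using gc k by (auto simp: scalar_prod_def atLeast0LessThan intro!: sum.cong)
  also have "\<dots> = (\<Sum>y<n. a $$ (k, y) * ?w $ y + (if y = c then t * ?ax k * ?w $ c else 0))"
    using k ac by (intro sum.cong) (auto simp: transvection_curve_entry algebra_simps)
  also have "\<dots> = (\<Sum>y<n. a $$ (k, y) * ?w $ y) + t * ?ax k * ?w $ c"
    using c by (simp add: sum.distrib)
  also have "\<dots> = (\<Sum>y<n. a $$ (k, y) * ?u y) - t * ?u c * ?ax k + t * ?ax k * ?u c"
    using c by (simp add: algebra_simps sum_subtractf sum_distrib_left)
  also have "\<dots> = (if k = 0 then 1 else 0)"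
    using GL_row_inv_col_sum[OF aG k, of 0] k c by simp
  finally show "(?g *\<^sub>v ?w) $ k = unit_vec n 0 $ k" using k by simp
qed (use GL_carrier[OF aG] in \<open>simp add: transvection_curve_def\<close>)

lemma transvection_curve_in_schubert_preimage:
  assumes a: "a \<in> schubert_preimage n i j" and c: "c < n" "x c = 0"
    and x: "\<And>k. k < n \<Longrightarrow> i \<le> k \<Longrightarrow> x k = 0" and orth: "(\<Sum>z<n. a $$ (n - 1, z) * x z) = 0"
    and d: "det (transvection_curve n a c x t) \<noteq> 0"
  shows "transvection_curve n a c x t \<in> schubert_preimage n i j"
    "\<And>k. k < n \<Longrightarrow> GL_inv (transvection_curve n a c x t) $$ (k, 0) =
       GL_inv a $$ (k, 0) - t * GL_inv a $$ (c, 0) * x k"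
proof -
  let ?g = "transvection_curve n a c x t"
  have aG: "a \<in> GL n" and ac: "a \<in> carrier_mat n n" using a by (auto simp: schubert_preimage_GL GL_carrier)
  have gG: "?g \<in> GL n" using ac d by (simp add: GL_iff_det transvection_curve_def)
  show inv: "\<And>k. k < n \<Longrightarrow> GL_inv ?g $$ (k, 0) = GL_inv a $$ (k, 0) - t * GL_inv a $$ (c, 0) * x k"
    using GL_inv_first_col_eqI[OF gG _ transvection_curve_mult_inv_first_col[of a n c x t, OF aG c]]
    by simp
  have "GL_inv ?g $$ (k, 0) = 0" if "k < n" "i \<le> k" for k
    using inv[OF that(1)] a x[OF that] that unfolding schubert_preimage_def by simp
  moreover have "?g $$ (n - 1, l) = 0" if "l < n" "l + 1 < j" for l
    using a that ac orth by (simp add: transvection_curve_entry schubert_preimage_def)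
  ultimately show "?g \<in> schubert_preimage n i j" using gG unfolding schubert_preimage_def by blast
qed

lemma orthogonal_vector_in_plane:
  assumes "p < n" "m < n" "p \<noteq> m"
  obtains x :: "nat \<Rightarrow> complex" where "\<And>k. k \<noteq> p \<Longrightarrow> k \<noteq> m \<Longrightarrow> x k = 0" "x p \<noteq> 0 \<or> x m \<noteq> 0"
    "(\<Sum>z<n. v z * x z) = 0"
proof -
  define x where "x k = (if v p = 0 then (if k = p then 1 else 0)
    else (if k = p then v m else if k = m then - v p else 0))" for k
  have "(\<Sum>z<n. v z * x z) = (\<Sum>z\<in>{p, m}. v z * x z)"
    using assms by (intro sum.mono_neutral_right) (auto simp: x_def)
  then have "(\<Sum>z<n. v z * x z) = 0" using assms(3) by (simp add: x_def)
  moreover have "x p \<noteq> 0 \<or> x m \<noteq> 0" "\<And>k. k \<noteq> p \<Longrightarrow> k \<noteq> m \<Longrightarrow> x k = 0"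
    using assms(3) by (auto simp: x_def)
  ultimately show ?thesis using that by blast
qed

text \<open>If \<open>u = a\<^sup>-\<^sup>1 e\<^sub>1\<close> vanishes in the range of \<open>schubert_dense_part_memI\<close>, then \<open>j < i\<close> and some
  \<open>u\<^sub>c \<noteq> 0\<close> has \<open>c < j - 1\<close>. Along \<open>a (1 + t x e\<^sub>c\<^sup>T)\<close>, with \<open>x \<in> \<langle>e\<^sub>j, e\<^sub>i\<rangle>\<close> orthogonal to the last
  row of \<open>a\<close>, the vector \<open>u - t u\<^sub>c x\<close> gains a nonzero entry in that range.\<close>
lemma schubert_curve_into_dense_part_degenerate:
  assumes a: "a \<in> schubert_preimage n i j" and i: "1 \<le> i" "i \<le> n" and j: "1 \<le> j" "j \<le> n"
    and ij: "i \<noteq> j \<or> n = 1"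
    and degenerate: "\<And>c. c < i \<Longrightarrow> i < j \<or> j \<le> c + 1 \<Longrightarrow> GL_inv a $$ (c, 0) = 0"
  shows "\<exists>\<gamma>. \<gamma> 0 = a \<and> curve_generically_in n \<gamma> (schubert_dense_part n i j)"
proof -
  have aG: "a \<in> GL n" and ac: "a \<in> carrier_mat n n" using a by (auto simp: schubert_preimage_GL GL_carrier)
  obtain c where c: "c < n" "GL_inv a $$ (c, 0) \<noteq> 0" using GL_inv_first_col_nonzero[OF aG] i by auto
  have "c < i"
  proof (rule ccontr)
    assume "\<not> c < i"
    then show False using a c unfolding schubert_preimage_def by auto
  qed
  then have "\<not> (i < j \<or> j \<le> c + 1)" using degenerate c(2) by blast
  then have cj: "c + 1 < j" "j < i" using ij j by auto
  have "j - 1 < n" "i - 1 < n" "j - 1 \<noteq> i - 1" using cj i by auto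
  then obtain x where x: "\<And>k. k \<noteq> j - 1 \<Longrightarrow> k \<noteq> i - 1 \<Longrightarrow> x k = 0"
    "x (j - 1) \<noteq> 0 \<or> x (i - 1) \<noteq> 0" "(\<Sum>z<n. a $$ (n - 1, z) * x z) = 0"
    using orthogonal_vector_in_plane[of "j - 1" n "i - 1" "\<lambda>z. a $$ (n - 1, z)"] by blast
  define q where "q = (if x (j - 1) \<noteq> 0 then j - 1 else i - 1)"
  have q: "q < i" "j \<le> q + 1" "x q \<noteq> 0" using x(2) cj j by (auto simp: q_def)
  define \<gamma> where "\<gamma> = transvection_curve n a c x"
  have curve: "poly_curve n \<gamma>" unfolding \<gamma>_def using ac by (rule transvection_curve_poly_curve)
  have "det (\<gamma> 0) \<noteq> 0" using aG transvection_curve_0[OF ac] by (simp add: \<gamma>_def GL_iff_det)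
  then obtain t0 where "t0 * det (\<gamma> t0) \<noteq> 0"
    using univariate_poly_common_nonzero[OF univariate_poly_id univariate_poly_det_along_curve[OF curve], of 1 0]
    by auto
  moreover have "\<gamma> t \<in> schubert_dense_part n i j" if t: "t * det (\<gamma> t) \<noteq> 0" for t
  proof -
    have "x c = 0" "\<And>k. k < n \<Longrightarrow> i \<le> k \<Longrightarrow> x k = 0" using x(1) cj by auto
    note on_curve = transvection_curve_in_schubert_preimage[OF a c(1) this x(3), of t]
    have "GL_inv (\<gamma> t) $$ (q, 0) \<noteq> 0"
      using on_curve(2)[of q] degenerate[OF q(1)] q t c(2) i by (auto simp: \<gamma>_def)
    then show ?thesis
      using schubert_dense_part_memI[OF on_curve(1) i j(2) q(1)] q(2) t by (simp add: \<gamma>_def)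
  qed
  ultimately have "curve_generically_in n \<gamma> (schubert_dense_part n i j)"
    unfolding curve_generically_in_def using curve
    by (intro conjI exI[of _ "\<lambda>t. t * det (\<gamma> t)"])
      (auto intro: univariate_poly_mult univariate_poly_id univariate_poly_det_along_curve)
  then show ?thesis using transvection_curve_0[OF ac] unfolding \<gamma>_def by blast
qed

lemma schubert_curve_into_dense_part:
  assumes a: "a \<in> schubert_preimage n i j" and i: "1 \<le> i" "i \<le> n" and j: "1 \<le> j" "j \<le> n"
    and ij: "i \<noteq> j \<or> n = 1"
  shows "\<exists>\<gamma>. \<gamma> 0 = a \<and> curve_generically_in n \<gamma> (schubert_dense_part n i j)"
proof (cases "\<exists>c<i. (i < j \<or> j \<le> c + 1) \<and> GL_inv a $$ (c, 0) \<noteq> 0")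
  case True
  then obtain c where "c < i" "i < j \<or> j \<le> c + 1" "GL_inv a $$ (c, 0) \<noteq> 0" by blast
  then have "a \<in> schubert_dense_part n i j" by (rule schubert_dense_part_memI[OF a i j(2)])
  moreover have "a \<in> carrier_mat n n" using a by (simp add: schubert_preimage_GL GL_carrier)
  ultimately have "curve_generically_in n (\<lambda>t. a) (schubert_dense_part n i j)"
    unfolding curve_generically_in_def
    by (intro conjI poly_curve_const exI[of _ "\<lambda>t. 1"]) (auto simp: univariate_poly_const)
  then show ?thesis by (intro exI[of _ "\<lambda>t. a"]) simp
next
  case False
  show ?thesis by (rule schubert_curve_into_dense_part_degenerate[OF a i j ij]) (use False in blast)
qed

lemma poly_irreducible_schubert_preimage:
  assumes "1 \<le> i" "i \<le> n" "1 \<le> j" "j \<le> n" "i \<noteq> j \<or> n = 1"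
  shows "poly_irreducible n (schubert_preimage n i j)"
proof (rule poly_irreducible_if_curves_into)
  show "schubert_dense_part n i j \<subseteq> schubert_preimage n i j"
    using assms by (intro schubert_dense_part_subset)
  show "poly_irreducible n (schubert_dense_part n i j)"
    unfolding schubert_dense_part_def
    by (intro curve_connected_imp_poly_irreducible curve_connected_GL_vanishing_products)
qed (rule schubert_curve_into_dense_part[OF _ assms])

lemma one_mat_schubert_preimage:
  assumes "1 \<le> i" "j \<le> n"
  shows "1\<^sub>m n \<in> schubert_preimage n i j"
proof -
  have G: "1\<^sub>m n \<in> GL n" using GL_I[of "1\<^sub>m n" n "1\<^sub>m n"] by simp
  then have "GL_inv (1\<^sub>m n) = 1\<^sub>m n" using GL_inv_eqI[of "1\<^sub>m n" n "1\<^sub>m n"] by simp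
  then show ?thesis using G assms unfolding schubert_preimage_def by auto
qed

lemma flag_irreducible_XK_Hij:
  assumes "1 \<le> i" "i \<le> n" "1 \<le> j" "j \<le> n" "i \<noteq> j \<or> n = 1"
  shows "flag_irreducible n (XK n (Hij n i j))"
proof -
  have "schubert_preimage n i j \<subseteq> GL n" "schubert_preimage n i j \<noteq> {}"
    using schubert_preimage_GL one_mat_schubert_preimage assms(1,4) by blast+
  moreover have "0 < n" using assms(1,2) by simp
  ultimately show ?thesis
    by (simp add: XK_Hij flag_irreducible_image poly_irreducible_schubert_preimage[OF assms])
qed

section \<open>Incomparability of the \<open>X\<^bsub>H\<^sub>i\<^sub>j\<^esub>\<close>\<close>

definition perm_mat :: "nat \<Rightarrow> (nat \<Rightarrow> nat) \<Rightarrow> complex mat" where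
  "perm_mat n \<pi> = mat n n (\<lambda>(r, c). if r = \<pi> c then 1 else 0)"

lemma perm_mat_GL:
  assumes inj: "inj_on \<pi> {..<n}" and range: "\<pi> ` {..<n} \<subseteq> {..<n}"
  shows "perm_mat n \<pi> \<in> GL n" "GL_inv (perm_mat n \<pi>) = transpose_mat (perm_mat n \<pi>)"
proof -
  let ?P = "perm_mat n \<pi>"
  have Pc: "?P \<in> carrier_mat n n" "transpose_mat ?P \<in> carrier_mat n n" by (auto simp: perm_mat_def)
  have "transpose_mat ?P * ?P = 1\<^sub>m n"
  proof (rule eq_matI)
    fix r c assume "r < dim_row (1\<^sub>m n :: complex mat)" "c < dim_col (1\<^sub>m n :: complex mat)"
    then have rc: "r < n" "c < n" by auto
    have "(transpose_mat ?P * ?P) $$ (r, c) = (\<Sum>k<n. ?P $$ (k, r) * ?P $$ (k, c))"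
      using mult_mat_entry[OF Pc(2,1) rc] Pc rc by simp
    also have "\<dots> = ?P $$ (\<pi> r, r) * ?P $$ (\<pi> r, c)"
      using rc range by (intro sum_eq_single_nonzero) (auto simp: perm_mat_def)
    also have "\<dots> = (if r = c then 1 else 0)"
    proof -
      have "\<pi> r < n" "\<pi> c < n" using rc range by auto
      then show ?thesis using rc inj_onD[OF inj, of r c] by (simp add: perm_mat_def)
    qed
    finally show "(transpose_mat ?P * ?P) $$ (r, c) = 1\<^sub>m n $$ (r, c)" using rc by simp
  qed (simp_all add: perm_mat_def)
  then show "?P \<in> GL n" "GL_inv ?P = transpose_mat ?P"
    using GL_I[OF Pc] GL_inv_eqI[OF _ Pc(2)] by blast+
qed

text \<open>For \<open>n \<ge> 2\<close> this needs \<open>i \<noteq> j\<close>, since \<open>(e\<^sub>n\<^sup>T g) (g\<^sup>-\<^sup>1 e\<^sub>1) = 0\<close>.\<close>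
lemma schubert_permutation_witness:
  assumes i: "1 \<le> i" "i \<le> n" and j: "1 \<le> j" "j \<le> n" and ij: "i \<noteq> j \<or> n = 1"
  obtains g where "g \<in> GL n" "\<And>a. a < n \<Longrightarrow> GL_inv g $$ (a, 0) = (if a = i - 1 then 1 else 0)"
    "\<And>b. b < n \<Longrightarrow> g $$ (n - 1, b) = (if b = j - 1 then 1 else 0)"
proof -
  have bound: "Transposition.transpose a b k < n" if "a < n" "b < n" "k < n" for a b k
    using that by (simp add: Transposition.transpose_def)
  define x where "x = Transposition.transpose 0 (i - 1) (j - 1)"
  define \<pi> where "\<pi> = Transposition.transpose x (n - 1) \<circ> Transposition.transpose 0 (i - 1)"
  have "inj \<pi>" unfolding \<pi>_def by (intro inj_compose inj_transpose)
  then have inj: "inj_on \<pi> {..<n}" by (rule inj_on_subset) simp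
  have x: "x < n" using i j by (simp add: x_def bound)
  have range: "\<pi> ` {..<n} \<subseteq> {..<n}" using i x by (auto simp: \<pi>_def bound)
  have \<pi>i: "\<pi> (i - 1) = 0"
  proof (cases "n = 1")
    case True
    then show ?thesis using x by (simp add: \<pi>_def)
  next
    case False
    then have "x \<noteq> 0" using ij i j by (auto simp: x_def Transposition.transpose_def)
    then show ?thesis using False i by (simp add: \<pi>_def)
  qed
  have \<pi>j: "\<pi> (j - 1) = n - 1" by (simp add: \<pi>_def x_def)
  have \<pi>a: "\<pi> a = 0 \<longleftrightarrow> a = i - 1" if "a < n" for a
    using inj_onD[OF inj, of a "i - 1"] that \<pi>i i by auto
  have \<pi>b: "\<pi> b = n - 1 \<longleftrightarrow> b = j - 1" if "b < n" for b
    using inj_onD[OF inj, of b "j - 1"] that \<pi>j j by auto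
  show ?thesis
  proof (rule that[of "perm_mat n \<pi>"])
    show "perm_mat n \<pi> \<in> GL n" by (rule perm_mat_GL(1)[OF inj range])
  next
    fix a assume "a < n"
    then show "GL_inv (perm_mat n \<pi>) $$ (a, 0) = (if a = i - 1 then 1 else 0)"
      using perm_mat_GL(2)[OF inj range] \<pi>a by (auto simp: perm_mat_def)
  next
    fix b assume b: "b < n"
    then have "perm_mat n \<pi> $$ (n - 1, b) = (if \<pi> b = n - 1 then 1 else 0)"
      by (auto simp: perm_mat_def)
    then show "perm_mat n \<pi> $$ (n - 1, b) = (if b = j - 1 then 1 else 0)"
      using \<pi>b[OF b] by simp
  qed
qed

lemma XK_Hij_not_subset:
  assumes i: "1 \<le> i" "i \<le> n" and j: "1 \<le> j" "j \<le> n" and ij: "i \<noteq> j \<or> n = 1"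
    and smaller: "i' < i \<or> j < j'"
  shows "\<not> XK n (Hij n i j) \<subseteq> XK n (Hij n i' j')"
proof
  assume sub: "XK n (Hij n i j) \<subseteq> XK n (Hij n i' j')"
  obtain g where g: "g \<in> GL n" "\<And>a. a < n \<Longrightarrow> GL_inv g $$ (a, 0) = (if a = i - 1 then 1 else 0)"
    "\<And>b. b < n \<Longrightarrow> g $$ (n - 1, b) = (if b = j - 1 then 1 else 0)"
    using schubert_permutation_witness[OF i j ij] by blast
  have n: "0 < n" using i by simp
  have "g \<in> schubert_preimage n i j" using g i j unfolding schubert_preimage_def by auto
  then have "g \<in> schubert_preimage n i' j'"
    using sub flag_in_XK_Hij_iff[OF n g(1)] by blast
  moreover have "GL_inv g $$ (i - 1, 0) = 1" "g $$ (n - 1, j - 1) = 1" using g(2,3) i j by simp_all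
  ultimately show False
    using smaller i j unfolding schubert_preimage_def by force
qed

lemma maximal_decomposition_XK_Hij_incomparable:
  assumes md: "maximal_decomposition n H S" and ij: "(i, j) \<in> S" "i \<noteq> j \<or> n = 1"
    and ij': "(i', j') \<in> S" and sub: "XK n (Hij n i j) \<subseteq> XK n (Hij n i' j')"
  shows "(i, j) = (i', j')"
proof (rule ccontr)
  assume "(i, j) \<noteq> (i', j')"
  then have "\<not> Hij n i j \<subseteq> Hij n i' j'" using md ij(1) ij' unfolding maximal_decomposition_def by fastforce
  then have "i' < i \<or> j < j'" using Hij_mono[of i i' j' j n] by linarith
  moreover have "1 \<le> i" "i \<le> n" "1 \<le> j" "j \<le> n" using md ij(1) unfolding maximal_decomposition_def by auto
  ultimately show False using XK_Hij_not_subset ij(2) sub by blast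
qed

section \<open>Minimality excludes diagonal terms\<close>

lemma Eunit_in_unit_span_iff:
  assumes "1 \<le> a" "a \<le> n" "1 \<le> b" "b \<le> n"
  shows "Eunit n a b \<in> unit_span n P \<longleftrightarrow> (a, b) \<in> P"
proof
  assume E: "Eunit n a b \<in> unit_span n P"
  show "(a, b) \<in> P"
  proof (rule ccontr)
    assume "(a, b) \<notin> P"
    then have "Eunit n a b $$ (a - 1, b - 1) = 0" using E assms unfolding unit_span_def by auto
    then show False using assms by (simp add: Eunit_entry)
  qed
next
  assume "(a, b) \<in> P"
  then have "\<not> (x = a - 1 \<and> y = b - 1)" if "(x + 1, y + 1) \<notin> P" for x y
    using that assms by auto
  then show "Eunit n a b \<in> unit_span n P"
    unfolding unit_span_def by (auto simp: Eunit_carrier Eunit_entry)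
qed

lemma unit_span_remove_diagonal_iff:
  assumes "1 \<le> k" "k \<le> n"
  shows "A \<in> unit_span n (P - {(k, k)}) \<longleftrightarrow> A \<in> unit_span n P \<and> A $$ (k - 1, k - 1) = 0"
  using assms unfolding unit_span_def by (auto dest: spec[of _ "k - 1"])

text \<open>If the entry at the corner \<open>(k, k)\<close> were nonzero, the supports of \<open>u = g\<^sup>-\<^sup>1 e\<^sub>1\<close> and
  \<open>v = e\<^sub>n\<^sup>T g\<close> would lie on either side of \<open>k\<close>, so that \<open>v u = u\<^sub>k v\<^sub>k \<noteq> 0\<close>; but
  \<open>v u = (g g\<^sup>-\<^sup>1)\<^sub>n\<^sub>1 = 0\<close>.\<close>
lemma conj_E1n_corner_entry_zero:
  assumes g: "g \<in> GL n" and n: "2 \<le> n" and k: "1 \<le> k" "k \<le> n"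
    and col: "\<And>a. (a, k) \<in> P \<Longrightarrow> a \<le> k" and row: "\<And>b. (k, b) \<in> P \<Longrightarrow> k \<le> b"
    and M: "GL_inv g * Eunit n 1 n * g \<in> unit_span n P"
  shows "GL_inv g $$ (k - 1, 0) * g $$ (n - 1, k - 1) = 0"
proof (rule ccontr)
  let ?u = "\<lambda>a. GL_inv g $$ (a, 0)" and ?v = "\<lambda>b. g $$ (n - 1, b)"
  assume nz: "?u (k - 1) * ?v (k - 1) \<noteq> 0"
  have supp: "(a + 1, b + 1) \<in> P" if "a < n" "b < n" "?u a \<noteq> 0" "?v b \<noteq> 0" for a b
    using M that unfolding conj_E1n_in_unit_span_iff[OF g] by blast
  have "?v c * ?u c = 0" if c: "c < n" "c \<noteq> k - 1" for c
  proof (rule ccontr)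
    assume "?v c * ?u c \<noteq> 0"
    then have "c + 1 \<le> k" "k \<le> c + 1"
      using supp[of c "k - 1"] supp[of "k - 1" c] col row nz c k by auto
    then show False using c(2) by simp
  qed
  then have "(\<Sum>c<n. ?v c * ?u c) = ?v (k - 1) * ?u (k - 1)"
    using k by (intro sum_eq_single_nonzero) auto
  moreover have "(\<Sum>c<n. ?v c * ?u c) = 0" using GL_row_inv_col_sum[OF g, of "n - 1" 0] n by simp
  ultimately show False using nz by simp
qed

lemma XK_remove_corner:
  assumes n: "2 \<le> n" and k: "1 \<le> k" "k \<le> n"
    and col: "\<And>a. (a, k) \<in> P \<Longrightarrow> a \<le> k" and row: "\<And>b. (k, b) \<in> P \<Longrightarrow> k \<le> b"
  shows "XK n (unit_span n (P - {(k, k)})) = XK n (unit_span n P)"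
proof -
  have "GL_inv g * Eunit n 1 n * g \<in> unit_span n (P - {(k, k)}) \<longleftrightarrow>
      GL_inv g * Eunit n 1 n * g \<in> unit_span n P" if g: "g \<in> GL n" for g
    using conj_E1n_corner_entry_zero[OF g n k col row]
      conj_E1n_entry[OF GL_inv_carrier[OF GL_carrier[OF g]] GL_carrier[OF g], of "k - 1" "k - 1"] k
    by (auto simp: unit_span_remove_diagonal_iff)
  then show ?thesis unfolding XK_eq by auto
qed

lemma hess_space_eq_Hsum_iff:
  assumes "hess_space n h = Hsum n S" "a \<in> {1..n}" "b \<in> {1..n}"
  shows "a \<le> h b \<longleftrightarrow> (\<exists>(i, j)\<in>S. a \<le> i \<and> j \<le> b)"
proof -
  have "a \<le> h b \<longleftrightarrow> Eunit n a b \<in> hess_space n h"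
    using assms(2,3) by (simp add: hess_space_def Eunit_in_unit_span_iff)
  also have "\<dots> \<longleftrightarrow> (a, b) \<in> (\<Union>(i, j)\<in>S. Hij_pattern n i j)"
    using assms by (simp add: Hsum_def Eunit_in_unit_span_iff)
  also have "\<dots> \<longleftrightarrow> (\<exists>(i, j)\<in>S. a \<le> i \<and> j \<le> b)"
    using assms(2,3) by (auto simp: Hij_pattern_def case_prod_beta)
  finally show ?thesis .
qed

text \<open>A diagonal term \<open>H\<^sub>k\<^sub>k\<close> of a maximal decomposition of \<open>H\<^sub>h\<close> makes \<open>(k, k)\<close> a corner of
  the Hessenberg pattern: any entry of \<open>H\<^sub>h\<close> below it in its column or left of it in its row
  would come from a term \<open>H\<^sub>i\<^sub>'\<^sub>j\<^sub>'\<close> containing \<open>H\<^sub>k\<^sub>k\<close>.\<close>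
lemma maximal_decomposition_diagonal_corner:
  assumes H: "H = hess_space n h" and hb: "\<forall>l\<in>{1..n}. h l \<le> n"
    and md: "maximal_decomposition n H S" and kS: "(k, k) \<in> S"
  shows "h k = k" "\<And>l. l \<in> {1..n} \<Longrightarrow> l < k \<Longrightarrow> h l < k"
proof -
  have Sb: "S \<subseteq> {1..n} \<times> {1..n}" and HS: "hess_space n h = Hsum n S"
    using md H unfolding maximal_decomposition_def by auto
  have k: "k \<in> {1..n}" using kS Sb by auto
  have only_kk: "(i', j') = (k, k)" if "(i', j') \<in> S" "k \<le> i'" "j' \<le> k" for i' j'
  proof (rule ccontr)
    assume "(i', j') \<noteq> (k, k)"
    moreover have "Hij n k k \<subseteq> Hij n i' j'" using that(2,3) by (rule Hij_mono)
    ultimately show False using md kS that(1) unfolding maximal_decomposition_def by fastforce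
  qed
  have "k \<le> h k" using hess_space_eq_Hsum_iff[OF HS k k] kS by blast
  moreover have "\<not> k + 1 \<le> h k"
  proof
    assume "k + 1 \<le> h k"
    moreover from this have "k + 1 \<in> {1..n}" using hb k by force
    ultimately obtain i' j' where "(i', j') \<in> S" "k + 1 \<le> i'" "j' \<le> k"
      using hess_space_eq_Hsum_iff[OF HS _ k, of "k + 1"] by blast
    then show False using only_kk by fastforce
  qed
  ultimately show "h k = k" by simp
  show "h l < k" if l: "l \<in> {1..n}" "l < k" for l
  proof (rule ccontr)
    assume "\<not> h l < k"
    then obtain i' j' where "(i', j') \<in> S" "k \<le> i'" "j' \<le> l"
      using hess_space_eq_Hsum_iff[OF HS k l(1)] by auto
    then show False using only_kk l(2) by fastforce
  qed
qed

lemma hess_space_lower_corner: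
  assumes n: "2 \<le> n" and hm: "mono_on {1..n} h" and hb: "\<forall>l\<in>{1..n}. h l \<le> n"
    and k: "1 \<le> k" "k \<le> n" and corner: "h k = k" "\<And>l. l \<in> {1..n} \<Longrightarrow> l < k \<Longrightarrow> h l < k"
  shows "is_hessenberg n (hess_space n (h(k := k - 1)))"
    "hess_space n (h(k := k - 1)) \<subset> hess_space n h"
    "XK n (hess_space n (h(k := k - 1))) = XK n (hess_space n h)"
proof -
  define P where "P = {(a, b). a \<in> {1..n} \<and> b \<in> {1..n} \<and> a \<le> h b}"
  let ?h' = "h(k := k - 1)"
  have H_P: "hess_space n h = unit_span n P" unfolding hess_space_def P_def ..
  have K'_P: "hess_space n ?h' = unit_span n (P - {(k, k)})"
    unfolding hess_space_def P_def using corner(1) by (auto intro!: arg_cong[where f = "unit_span n"])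
  have "mono_on {1..n} ?h'"
  proof (rule mono_onI)
    fix x y assume xy: "x \<in> {1..n}" "y \<in> {1..n}" "x \<le> y"
    then show "?h' x \<le> ?h' y"
      using mono_onD[OF hm xy] mono_onD[OF hm _ xy(2), of k] corner(1) corner(2)[of x] k
      by (cases "x = k"; cases "y = k") auto
  qed
  moreover have "\<forall>l\<in>{1..n}. ?h' l \<le> n" using hb k by simp
  ultimately show "is_hessenberg n (hess_space n ?h')"
    unfolding is_hessenberg_def by blast
  have "Eunit n k k \<in> hess_space n h" "Eunit n k k \<notin> hess_space n ?h'"
    unfolding H_P K'_P using k corner(1) by (simp_all add: P_def Eunit_in_unit_span_iff)
  moreover have "unit_span n (P - {(k, k)}) \<subseteq> unit_span n P" by (rule unit_span_mono) blast
  ultimately show "hess_space n ?h' \<subset> hess_space n h" unfolding H_P K'_P by blast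
  have col: "a \<le> k" if "(a, k) \<in> P" for a using that corner(1) by (simp add: P_def)
  have row: "k \<le> b" if "(k, b) \<in> P" for b
  proof (rule ccontr)
    assume "\<not> k \<le> b"
    then have "h b < k" using corner(2)[of b] that by (simp add: P_def)
    then show False using that by (simp add: P_def)
  qed
  show "XK n (hess_space n ?h') = XK n (hess_space n h)"
    unfolding H_P K'_P using col row by (rule XK_remove_corner[OF n k])
qed

lemma minimal_maximal_decomposition_no_diagonal:
  assumes n: "2 \<le> n" and mc: "minimal_in_class n H" and md: "maximal_decomposition n H S"
  shows "(k, k) \<notin> S"
proof
  assume kS: "(k, k) \<in> S"
  obtain h where hm: "mono_on {1..n} h" and hb: "\<forall>l\<in>{1..n}. h l \<le> n" and H: "H = hess_space n h"
    using mc unfolding minimal_in_class_def is_hessenberg_def by blast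
  have k: "1 \<le> k" "k \<le> n" using kS md unfolding maximal_decomposition_def by auto
  note lower = hess_space_lower_corner[OF n hm hb k maximal_decomposition_diagonal_corner[OF H hb md kS]]
  then show False using mc unfolding minimal_in_class_def E1n_equivalent_def H by blast
qed

theorem mainTheorem8:
  fixes n :: nat and H :: "complex mat set" and S :: "(nat \<times> nat) set"
  assumes "1 \<le> n"
    and "minimal_in_class n H"
    and "maximal_decomposition n H S"
  shows "{Y. irreducible_component n (XK n H) Y} = (\<lambda>(i, j). XK n (Hij n i j)) ` S"
proof -
  have S: "S \<subseteq> {1..n} \<times> {1..n}" and H: "H = Hsum n S"
    using assms(3) unfolding maximal_decomposition_def by auto
  have no_diagonal: "i \<noteq> j \<or> n = 1" if "(i, j) \<in> S" for i j
    using minimal_maximal_decomposition_no_diagonal[OF _ assms(2,3)] that assms(1) by fastforce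
  have "XK n H = (\<Union>(i, j)\<in>S. XK n (Hij n i j))" using XK_Hsum assms(1) H by simp
  also have "{Y. irreducible_component n \<dots> Y} = (\<lambda>(i, j). XK n (Hij n i j)) ` S"
  proof (rule irreducible_components_finite_union)
    show "finite S" using S by (rule finite_subset) simp
    fix s assume "s \<in> S"
    then show "flag_closed n ((\<lambda>(i, j). XK n (Hij n i j)) s)"
      and "flag_irreducible n ((\<lambda>(i, j). XK n (Hij n i j)) s)"
      using S assms(1) no_diagonal by (auto simp: flag_closed_XK_Hij flag_irreducible_XK_Hij)
  next
    fix s t assume st: "s \<in> S" "t \<in> S"
      "(\<lambda>(i, j). XK n (Hij n i j)) s \<subseteq> (\<lambda>(i, j). XK n (Hij n i j)) t"
    obtain i j i' j' where "s = (i, j)" "t = (i', j')" by (cases s, cases t)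
    then show "s = t"
      using maximal_decomposition_XK_Hij_incomparable[OF assms(3), of i j i' j'] no_diagonal[of i j] st
      by simp
  qed
  finally show ?thesis .
qed

end
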